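(* Let $P\in\mathcal H$ be a right group-like projection such that $\mathcal V_P$ is a Frobenius algebra, and let $y\in{}_P\mathcal V$ be a cyclic element for the right $\mathcal V_P$-module ${}_P\mathcal V$ (so that $a\mapsto S(a)y$ is a linear bijection $\mathcal V_P\to{}_P\mathcal V$). Define $\iota_y:{}_P\mathcal V\to\mathcal V_P$ by $\iota_y(S(a)y)=a$ for $a\in\mathcal V_P$, and put $z_y=P_{(2)}\,\iota_y(P_{(1)})\in\mathcal V_P$. If $z_y$ is invertible in $\mathcal V_P$, then every right $\mathcal V_P$-module is completely reducible; in particular $\mathcal V_P$ is semisimple.
   Context: $k$ is a field; $\mathcal H$ is a Hopf algebra over $k$ with comultiplication $\Delta$ (Sweedler notation $\Delta(x)=x_{(1)}\otimes x_{(2)}$), counit $\varepsilon$, invertible antipode $S$, dual $\mathcal H'$. For $P\in\mathcal H$, $\mathcal V_P=\{(\nu\otimes\mathrm{id})\Delta(P):\nu\in\mathcal H'\}$ and ${}_P\mathcal V=\{(\mathrm{id}\otimes\nu)\Delta(P):\nu\in\mathcal H'\}$. A non-zero idempotent $P$ is a right group-like projection if $\Delta(P)(1\otimes P)=(1\otimes P)\Delta(P)=P\otimes P$; then $\mathcal V_P$ is a subalgebra, $(1\otimes a)\Delta(P)=(S(a)\otimes1)\Delta(P)$ for $a\in\mathcal V_P$, and ${}_P\mathcal V$ is a right $\mathcal V_P$-module via $x\cdot a=S(a)x$. A finite-dimensional unital algebra is Frobenius if it admits a non-degenerate bilinear form $\sigma$ with $\sigma(ab,c)=\sigma(a,bc)$.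 An element $y$ of a right module $M$ is cyclic if $y\cdot\mathcal V_P=M$. *)

theory Defs
  imports Complex_Main
begin

text \<open>
  Elements of the tensor product H (x) H are represented by finite lists of pairs
  (a_i, b_i) standing for sum_i a_i (x) b_i; two such lists represent the same tensor
  iff they agree under all products of linear functionals (true over a field).
\<close>

definition lin_fun :: "('k::field \<Rightarrow> 'h::ring_1 \<Rightarrow> 'h) \<Rightarrow> ('h \<Rightarrow> 'k) \<Rightarrow> bool" where
  "lin_fun sc \<phi> \<longleftrightarrow> (\<forall>c x y. \<phi> (sc c x + y) = c * \<phi> x + \<phi> y)"

definition lin_map :: "('k::field \<Rightarrow> 'h::ring_1 \<Rightarrow> 'h) \<Rightarrow> ('h \<Rightarrow> 'h) \<Rightarrow> bool" where
  "lin_map sc f \<longleftrightarrow> (\<forall>c x y. f (sc c x + y) = sc c (f x) + f y)"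

definition tens_eq :: "('k::field \<Rightarrow> 'h::ring_1 \<Rightarrow> 'h) \<Rightarrow> ('h \<times> 'h) list \<Rightarrow> ('h \<times> 'h) list \<Rightarrow> bool" where
  "tens_eq sc s t \<longleftrightarrow> (\<forall>\<phi> \<psi>. lin_fun sc \<phi> \<and> lin_fun sc \<psi> \<longrightarrow>
      (\<Sum>(a,b)\<leftarrow>s. \<phi> a * \<psi> b) = (\<Sum>(a,b)\<leftarrow>t. \<phi> a * \<psi> b))"

definition tens3_eq :: "('k::field \<Rightarrow> 'h::ring_1 \<Rightarrow> 'h) \<Rightarrow> ('h \<times> 'h \<times> 'h) list \<Rightarrow> ('h \<times> 'h \<times> 'h) list \<Rightarrow> bool" where
  "tens3_eq sc s t \<longleftrightarrow> (\<forall>\<phi> \<psi> \<chi>. lin_fun sc \<phi> \<and> lin_fun sc \<psi> \<and> lin_fun sc \<chi> \<longrightarrow>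
      (\<Sum>(a,b,c)\<leftarrow>s. \<phi> a * \<psi> b * \<chi> c) = (\<Sum>(a,b,c)\<leftarrow>t. \<phi> a * \<psi> b * \<chi> c))"

definition hopf_algebra ::
  "('k::field \<Rightarrow> 'h::ring_1 \<Rightarrow> 'h) \<Rightarrow> ('h \<Rightarrow> ('h \<times> 'h) list) \<Rightarrow> ('h \<Rightarrow> 'k) \<Rightarrow> ('h \<Rightarrow> 'h) \<Rightarrow> bool" where
  "hopf_algebra sc D eps S \<longleftrightarrow>
     Vector_Spaces.vector_space sc \<and>
     (\<forall>c x y. sc c (x * y) = sc c x * y \<and> sc c (x * y) = x * sc c y) \<and>
     (\<forall>c x y. tens_eq sc (D (sc c x + y)) (map (\<lambda>(a,b). (sc c a, b)) (D x) @ D y)) \<and>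
     (\<forall>x y. tens_eq sc (D (x * y))
        (concat (map (\<lambda>(a,b). map (\<lambda>(a',b'). (a * a', b * b')) (D y)) (D x)))) \<and>
     tens_eq sc (D 1) [(1,1)] \<and>
     (\<forall>x. tens3_eq sc
        (concat (map (\<lambda>(a,b). map (\<lambda>(a',b'). (a', b', b)) (D a)) (D x)))
        (concat (map (\<lambda>(a,b). map (\<lambda>(b',b''). (a, b', b'')) (D b)) (D x)))) \<and>
     lin_fun sc eps \<and> (\<forall>x y. eps (x * y) = eps x * eps y) \<and> eps 1 = 1 \<and>
     (\<forall>x. (\<Sum>(a,b)\<leftarrow>D x. sc (eps a) b) = x \<and> (\<Sum>(a,b)\<leftarrow>D x. sc (eps b) a) = x) \<and>
     lin_map sc S \<and>
     (\<forall>x. (\<Sum>(a,b)\<leftarrow>D x. S a * b) = sc (eps x) 1 \<and> (\<Sum>(a,b)\<leftarrow>D x. a * S b) = sc (eps x) 1) \<and>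
     bij S"

definition VP :: "('k::field \<Rightarrow> 'h::ring_1 \<Rightarrow> 'h) \<Rightarrow> ('h \<Rightarrow> ('h \<times> 'h) list) \<Rightarrow> 'h \<Rightarrow> 'h set" where
  "VP sc D P = {(\<Sum>(a,b)\<leftarrow>D P. sc (\<nu> a) b) | \<nu>. lin_fun sc \<nu>}"

definition PV :: "('k::field \<Rightarrow> 'h::ring_1 \<Rightarrow> 'h) \<Rightarrow> ('h \<Rightarrow> ('h \<times> 'h) list) \<Rightarrow> 'h \<Rightarrow> 'h set" where
  "PV sc D P = {(\<Sum>(a,b)\<leftarrow>D P. sc (\<nu> b) a) | \<nu>. lin_fun sc \<nu>}"

definition right_group_like_proj ::
  "('k::field \<Rightarrow> 'h::ring_1 \<Rightarrow> 'h) \<Rightarrow> ('h \<Rightarrow> ('h \<times> 'h) list) \<Rightarrow> 'h \<Rightarrow> bool" where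
  "right_group_like_proj sc D P \<longleftrightarrow> P \<noteq> 0 \<and> P * P = P \<and>
     tens_eq sc (map (\<lambda>(a,b). (a, b * P)) (D P)) [(P,P)] \<and>
     tens_eq sc (map (\<lambda>(a,b). (a, P * b)) (D P)) [(P,P)]"

definition frobenius :: "('k::field \<Rightarrow> 'h::ring_1 \<Rightarrow> 'h) \<Rightarrow> 'h set \<Rightarrow> bool" where
  "frobenius sc V \<longleftrightarrow>
     0 \<in> V \<and> (\<forall>x\<in>V. \<forall>y\<in>V. \<forall>c. sc c x + y \<in> V \<and> x * y \<in> V) \<and>
     (\<exists>B. finite B \<and> B \<subseteq> V \<and> V = Modules.module.span sc B) \<and>
     (\<exists>e\<in>V. \<forall>a\<in>V. e * a = a \<and> a * e = a) \<and>
     (\<exists>\<sigma> :: 'h \<Rightarrow> 'h \<Rightarrow> 'k.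
        (\<forall>a\<in>V. \<forall>b\<in>V. \<forall>d\<in>V. \<forall>c.
            \<sigma> (sc c a + b) d = c * \<sigma> a d + \<sigma> b d \<and>
            \<sigma> d (sc c a + b) = c * \<sigma> d a + \<sigma> d b \<and>
            \<sigma> (a * b) d = \<sigma> a (b * d)) \<and>
        (\<forall>a\<in>V. (\<forall>b\<in>V. \<sigma> a b = 0) \<longrightarrow> a = 0) \<and>
        (\<forall>b\<in>V. (\<forall>a\<in>V. \<sigma> a b = 0) \<longrightarrow> b = 0))"

definition alg_unit :: "'h::ring_1 set \<Rightarrow> 'h" where
  "alg_unit V = (THE e. e \<in> V \<and> (\<forall>a\<in>V. e * a = a \<and> a * e = a))"

definition invertible_in :: "'h::ring_1 set \<Rightarrow> 'h \<Rightarrow> bool" where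
  "invertible_in V z \<longleftrightarrow> z \<in> V \<and> (\<exists>w\<in>V. z * w = alg_unit V \<and> w * z = alg_unit V)"

definition cyclic_elem ::
  "('k::field \<Rightarrow> 'h::ring_1 \<Rightarrow> 'h) \<Rightarrow> ('h \<Rightarrow> ('h \<times> 'h) list) \<Rightarrow> ('h \<Rightarrow> 'h) \<Rightarrow> 'h \<Rightarrow> 'h \<Rightarrow> bool" where
  "cyclic_elem sc D S P y \<longleftrightarrow> y \<in> PV sc D P \<and> (\<lambda>a. S a * y) ` VP sc D P = PV sc D P"

definition iota ::
  "('k::field \<Rightarrow> 'h::ring_1 \<Rightarrow> 'h) \<Rightarrow> ('h \<Rightarrow> ('h \<times> 'h) list) \<Rightarrow> ('h \<Rightarrow> 'h) \<Rightarrow> 'h \<Rightarrow> 'h \<Rightarrow> 'h \<Rightarrow> 'h" where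
  "iota sc D S P y x = inv_into (VP sc D P) (\<lambda>a. S a * y) x"

text \<open>z_y = P_(2) iota_y(P_(1)); computed via any linear extension of iota_y to H
  (the result only depends on iota_y restricted to _P V, which contains the left legs).\<close>
definition zy ::
  "('k::field \<Rightarrow> 'h::ring_1 \<Rightarrow> 'h) \<Rightarrow> ('h \<Rightarrow> ('h \<times> 'h) list) \<Rightarrow> ('h \<Rightarrow> 'h) \<Rightarrow> 'h \<Rightarrow> 'h \<Rightarrow> 'h" where
  "zy sc D S P y =
     (let f = (SOME f. lin_map sc f \<and> (\<forall>x\<in>PV sc D P. f x = iota sc D S P y x))
      in (\<Sum>(a,b)\<leftarrow>D P. b * f a))"

definition right_module ::
  "'h::ring_1 set \<Rightarrow> 'h \<Rightarrow> 'm::ab_group_add set \<Rightarrow> ('m \<Rightarrow> 'h \<Rightarrow> 'm) \<Rightarrow> bool" where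
  "right_module V e M act \<longleftrightarrow>
     0 \<in> M \<and> (\<forall>x\<in>M. \<forall>y\<in>M. x + y \<in> M) \<and> (\<forall>x\<in>M. - x \<in> M) \<and>
     (\<forall>x\<in>M. \<forall>a\<in>V. act x a \<in> M) \<and>
     (\<forall>x\<in>M. \<forall>y\<in>M. \<forall>a\<in>V. act (x + y) a = act x a + act y a) \<and>
     (\<forall>x\<in>M. \<forall>a\<in>V. \<forall>b\<in>V. act x (a + b) = act x a + act x b) \<and>
     (\<forall>x\<in>M. \<forall>a\<in>V. \<forall>b\<in>V. act x (a * b) = act (act x a) b) \<and>
     (\<forall>x\<in>M. act x e = x)"

definition submodule ::
  "'h::ring_1 set \<Rightarrow> 'm::ab_group_add set \<Rightarrow> ('m \<Rightarrow> 'h \<Rightarrow> 'm) \<Rightarrow> 'm set \<Rightarrow> bool" where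
  "submodule V M act N \<longleftrightarrow> N \<subseteq> M \<and> 0 \<in> N \<and> (\<forall>x\<in>N. \<forall>y\<in>N. x + y \<in> N) \<and>
     (\<forall>x\<in>N. - x \<in> N) \<and> (\<forall>x\<in>N. \<forall>a\<in>V. act x a \<in> N)"

definition completely_reducible ::
  "'h::ring_1 set \<Rightarrow> 'm::ab_group_add set \<Rightarrow> ('m \<Rightarrow> 'h \<Rightarrow> 'm) \<Rightarrow> bool" where
  "completely_reducible V M act \<longleftrightarrow>
     (\<forall>N. submodule V M act N \<longrightarrow>
        (\<exists>N'. submodule V M act N' \<and> N \<inter> N' = {0} \<and> {x + y | x y. x \<in> N \<and> y \<in> N'} = M))"

definition semisimple_alg :: "'h::ring_1 set \<Rightarrow> bool" where
  "semisimple_alg V \<longleftrightarrow> completely_reducible V V (\<lambda>x a. x * a)"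

end

(*
  For a in V_P, right group-likeness of P gives (1 \<otimes> a) \<Delta>(P) = (S(a) \<otimes> 1) \<Delta>(P). This makes
  z_y = P_(2) \<iota>_y(P_(1)) central in V_P, and it turns the average a \<mapsto> E(a P_(2)) \<iota>_y(P_(1)) of any
  k-linear projection E of V_P onto a right ideal J into a right V_P-linear map into J which acts on J
  as right multiplication by z_y. Correcting by z_y\<inverse> yields a V_P-linear retraction onto J, so
  every right ideal is a direct summand, and a Zorn's lemma argument extends this to all right
  V_P-modules.
  The map a \<mapsto> S(a) y is injective, so that \<iota>_y is well defined, because it maps V_P onto _PV and
  pairing the two legs of \<Delta>(P) shows dim _PV \<ge> dim V_P.
*)

theory Submission
  imports Defs
begin

lemma vector_space_scalars: "vector_space ((*) :: 'k::field \<Rightarrow> 'k \<Rightarrow> 'k)"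
  by unfold_locales (auto simp: algebra_simps)

lemma vector_space_pair_scalars:
  "vector_space s \<Longrightarrow> vector_space_pair s ((*) :: 'k::field \<Rightarrow> 'k \<Rightarrow> 'k)"
  using vector_space_scalars by (simp add: vector_space_pair_def)

lemma linear_iff_preserves_affine_combination:
  assumes "vector_space_pair s1 s2"
  shows "Vector_Spaces.linear s1 s2 f \<longleftrightarrow> (\<forall>c x y. f (s1 c x + y) = s2 c (f x) + f y)"
proof
  interpret vector_space_pair s1 s2 by fact
  show "\<forall>c x y. f (s1 c x + y) = s2 c (f x) + f y" if "Vector_Spaces.linear s1 s2 f"
    using that by (simp add: linear_add linear_scale)
  assume affine: "\<forall>c x y. f (s1 c x + y) = s2 c (f x) + f y"
  have add: "f (x + y) = f x + f y" for x y
    using affine[rule_format, of 1 x y] by simp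
  have "f 0 = 0"
    using add[of 0 0] by simp
  then have "f (s1 c x) = s2 c (f x)" for c x
    using affine[rule_format, of c x 0] by simp
  with add show "Vector_Spaces.linear s1 s2 f"
    by (simp add: Vector_Spaces.linear_iff vs1.vector_space_axioms vs2.vector_space_axioms)
qed

lemma lin_fun_iff_linear: "vector_space sc \<Longrightarrow> lin_fun sc \<phi> \<longleftrightarrow> Vector_Spaces.linear sc (*) \<phi>"
  by (simp add: lin_fun_def linear_iff_preserves_affine_combination vector_space_pair_scalars)

lemma lin_map_iff_linear: "vector_space sc \<Longrightarrow> lin_map sc f \<longleftrightarrow> Vector_Spaces.linear sc sc f"
  by (simp add: lin_map_def linear_iff_preserves_affine_combination vector_space_pair_def)

lemma sum_list_pairs_cong:
  "(\<And>a b. (a, b) \<in> set xs \<Longrightarrow> F a b = G a b) \<Longrightarrow> (\<Sum>(a,b)\<leftarrow>xs. F a b) = (\<Sum>(a,b)\<leftarrow>xs. G a b)"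
  by (induction xs) auto

lemma sum_list_pairs_swap:
  fixes F :: "'a \<Rightarrow> 'b \<Rightarrow> 'c \<Rightarrow> 'd \<Rightarrow> 'e::comm_monoid_add"
  shows "(\<Sum>(a,b)\<leftarrow>xs. \<Sum>(c,d)\<leftarrow>ys. F a b c d) = (\<Sum>(c,d)\<leftarrow>ys. \<Sum>(a,b)\<leftarrow>xs. F a b c d)"
proof -
  have "(\<Sum>x\<leftarrow>xs. \<Sum>y\<leftarrow>ys. G x y) = (\<Sum>y\<leftarrow>ys. \<Sum>x\<leftarrow>xs. G x y)"
    for G :: "_ \<Rightarrow> _ \<Rightarrow> 'e"
    by (induction xs) (simp_all add: sum_list_addf)
  from this[of "\<lambda>(a,b) (c,d). F a b c d"] show ?thesis
    by (simp add: split_def)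
qed

lemma sum_list_pairs_map:
  "(\<Sum>(u,v)\<leftarrow>map (\<lambda>(a,b). (g a b, h a b)) xs. F u v) = (\<Sum>(a,b)\<leftarrow>xs. F (g a b) (h a b))"
  by (induction xs) auto

lemma sum_list_pairs_diff:
  fixes F G :: "'a \<Rightarrow> 'b \<Rightarrow> 'c::ab_group_add"
  shows "(\<Sum>(a,b)\<leftarrow>xs. F a b - G a b) = (\<Sum>(a,b)\<leftarrow>xs. F a b) - (\<Sum>(a,b)\<leftarrow>xs. G a b)"
  by (induction xs) auto

lemma sum_list_pairs_mult_right:
  fixes k :: "'a::semiring_0"
  shows "(\<Sum>(a,b)\<leftarrow>xs. F a b) * k = (\<Sum>(a,b)\<leftarrow>xs. F a b * k)"
  by (induction xs) (auto simp: distrib_right)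

lemma sum_list_pairs_mult_left:
  fixes k :: "'a::semiring_0"
  shows "k * (\<Sum>(a,b)\<leftarrow>xs. F a b) = (\<Sum>(a,b)\<leftarrow>xs. k * F a b)"
  by (induction xs) (auto simp: distrib_left)

lemma sum_list_pairs_add:
  fixes F G :: "'a \<Rightarrow> 'b \<Rightarrow> 'c::comm_monoid_add"
  shows "(\<Sum>(a,b)\<leftarrow>xs. F a b + G a b) = (\<Sum>(a,b)\<leftarrow>xs. F a b) + (\<Sum>(a,b)\<leftarrow>xs. G a b)"
  by (induction xs) (auto simp: ac_simps)

context vector_space_pair
begin

lemma linear_sum_list_pairs:
  "Vector_Spaces.linear s1 s2 f \<Longrightarrow> f (\<Sum>(a,b)\<leftarrow>xs. F a b) = (\<Sum>(a,b)\<leftarrow>xs. f (F a b))"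
  by (induction xs) (auto simp: linear_add linear_0)

lemma linear_sum_list_pairs_scale:
  "Vector_Spaces.linear s1 s2 f \<Longrightarrow>
    f (\<Sum>(a,b)\<leftarrow>xs. s1 (h a b) (g a b)) = (\<Sum>(a,b)\<leftarrow>xs. s2 (h a b) (f (g a b)))"
  by (simp add: linear_sum_list_pairs linear_scale)

lemma linear_compose_sum_list_pairs:
  "(\<And>a b. Vector_Spaces.linear s1 s2 (\<lambda>x. H x a b)) \<Longrightarrow>
    Vector_Spaces.linear s1 s2 (\<lambda>x. \<Sum>(a,b)\<leftarrow>xs. H x a b)"
  by (induction xs) (auto intro: linear_compose_add linear_zero)

lemma scale_sum_list_pairs: "s2 c (\<Sum>(a,b)\<leftarrow>xs. F a b) = (\<Sum>(a,b)\<leftarrow>xs. s2 c (F a b))"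
  by (induction xs) (auto simp: vs2.scale_right_distrib)

end

context vector_space
begin

lemma finite_set_coordinates:
  assumes "finite X"
  obtains C \<psi> where "finite C" "\<And>g. Vector_Spaces.linear scale (*) (\<psi> g)"
    "\<And>x. x \<in> X \<Longrightarrow> x = (\<Sum>g\<in>C. scale (\<psi> g x) g)"
proof -
  obtain B where B: "B \<subseteq> X" "independent B" "X \<subseteq> span B"
    using maximal_independent_subset by blast
  have "finite B" using B(1) assms finite_subset by blast
  define BB where "BB = extend_basis B"
  have BB: "independent BB" "span BB = UNIV" "B \<subseteq> BB"
    using B(2) by (auto simp: BB_def independent_extend_basis extend_basis_superset)
  define \<psi> where "\<psi> g x = representation BB x g" for g x
  have "Vector_Spaces.linear scale (*) (\<psi> g)" for g
    unfolding \<psi>_def linear_iff_preserves_affine_combination[OF vector_space_pair_scalars[OF vector_space_axioms]]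
    using BB by (simp add: representation_add representation_scale)
  moreover have "x = (\<Sum>g\<in>B. scale (\<psi> g x) g)" if "x \<in> X" for x
  proof -
    have "x \<in> span B" using that B by auto
    then have "representation BB x = representation B x"
      using representation_extend[OF BB(1) _ BB(3)] by blast
    then show ?thesis
      unfolding \<psi>_def using sum_representation_eq[OF B(2) \<open>x \<in> span B\<close> \<open>finite B\<close>] by simp
  qed
  ultimately show ?thesis using that \<open>finite B\<close> by blast
qed

lemma exists_dual_functionals:
  assumes "independent B"
  obtains \<psi> where "\<And>v. Vector_Spaces.linear scale (*) (\<psi> v)"
    "\<And>u v. u \<in> B \<Longrightarrow> \<psi> v u = (if v = u then 1 else 0)"
proof -
  define BB where "BB = extend_basis B"
  have BB: "independent BB" "span BB = UNIV" "B \<subseteq> BB"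
    using assms by (auto simp: BB_def independent_extend_basis extend_basis_superset)
  define \<psi> where "\<psi> v x = representation BB x v" for v x
  have "Vector_Spaces.linear scale (*) (\<psi> v)" for v
    unfolding \<psi>_def linear_iff_preserves_affine_combination[OF vector_space_pair_scalars[OF vector_space_axioms]]
    using BB by (simp add: representation_add representation_scale)
  moreover have "\<psi> v u = (if v = u then 1 else 0)" if "u \<in> B" for u v
    unfolding \<psi>_def using representation_basis[OF BB(1)] that BB(3) by auto
  ultimately show ?thesis
    using that by blast
qed

lemma eq_if_functionals_agree:
  assumes "\<And>\<phi>. Vector_Spaces.linear scale (*) \<phi> \<Longrightarrow> \<phi> x = \<phi> y"
  shows "x = y"
proof -
  obtain C \<psi> where C: "finite C" "\<And>g. Vector_Spaces.linear scale (*) (\<psi> g)"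
    "x - y = (\<Sum>g\<in>C. scale (\<psi> g (x - y)) g)"
    using finite_set_coordinates[of "{x - y}"] by auto
  interpret scalars: vector_space_pair scale "(*)"
    by (rule vector_space_pair_scalars[OF vector_space_axioms])
  have "\<psi> g (x - y) = 0" for g
    using assms[OF C(2)] scalars.linear_diff[OF C(2)] by simp
  then have "(\<Sum>g\<in>C. scale (\<psi> g (x - y)) g) = 0"
    by simp
  with C(3) have "x - y = 0" by (rule trans)
  then show ?thesis by (simp only: right_minus_eq)
qed

lemma exists_linear_projection:
  assumes "subspace J"
  obtains E where "Vector_Spaces.linear scale scale E" "\<And>x. E x \<in> J" "\<And>j. j \<in> J \<Longrightarrow> E j = j"
proof -
  interpret pair: vector_space_pair scale scale
    by (simp add: vector_space_pair_def vector_space_axioms)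
  obtain B where B: "B \<subseteq> J" "independent B" "J \<subseteq> span B"
    using maximal_independent_subset by blast
  obtain E where E: "Vector_Spaces.linear scale scale E" "\<forall>x\<in>B. E x = id x" "range E = span (id ` B)"
    using pair.linear_independent_extend_subspace[OF B(2), of id] by blast
  have "E x \<in> J" for x
    using E(3) span_minimal[OF B(1) assms] by auto
  moreover have "E j = j" if "j \<in> J" for j
    using pair.linear_eq_on[OF E(1) linear_id, of j B] B(3) that E(2) by auto
  ultimately show ?thesis
    using that E(1) by blast
qed

end

section \<open>Tensors tested against functionals\<close>

locale tensor_transfer = vector_space_pair s1 s2
  for s1 :: "'k::field \<Rightarrow> 'h::ring_1 \<Rightarrow> 'h" and s2 :: "'k \<Rightarrow> 'b::ab_group_add \<Rightarrow> 'b"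

context tensor_transfer
begin

lemma sum_list_pairs_expand_snd:
  assumes "finite C"
    and coords: "\<And>a b. (a, b) \<in> set xs \<Longrightarrow> b = (\<Sum>g\<in>C. s1 (\<psi> g b) g)"
    and F1: "\<And>b. Vector_Spaces.linear s1 s2 (\<lambda>a. F a b)"
    and F2: "\<And>a. Vector_Spaces.linear s1 s2 (F a)"
  shows "(\<Sum>(a,b)\<leftarrow>xs. F a b) = (\<Sum>g\<in>C. F (\<Sum>(a,b)\<leftarrow>xs. s1 (\<psi> g b) a) g)"
  using coords
proof (induction xs)
  case Nil
  then show ?case using linear_0[OF F1] by simp
next
  case (Cons p xs)
  obtain a b where p: "p = (a, b)" by fastforce
  have "b = (\<Sum>g\<in>C. s1 (\<psi> g b) g)"
    by (rule Cons.prems[of a b]) (simp add: p)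
  then have "F a b = F a (\<Sum>g\<in>C. s1 (\<psi> g b) g)"
    by (rule arg_cong)
  also have "\<dots> = (\<Sum>g\<in>C. F (s1 (\<psi> g b) a) g)"
    by (simp add: linear_sum[OF F2] linear_scale[OF F2] linear_scale[OF F1])
  finally have "F a b = (\<Sum>g\<in>C. F (s1 (\<psi> g b) a) g)" .
  moreover have "(\<Sum>(a,b)\<leftarrow>xs. F a b) = (\<Sum>g\<in>C. F (\<Sum>(a,b)\<leftarrow>xs. s1 (\<psi> g b) a) g)"
    using Cons by auto
  ultimately show ?case
    by (simp add: p sum.distrib linear_add[OF F1])
qed

lemma sum_list_pairs_expand_fst:
  assumes "finite C"
    and coords: "\<And>a b. (a, b) \<in> set xs \<Longrightarrow> a = (\<Sum>g\<in>C. s1 (\<psi> g a) g)"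
    and F1: "\<And>b. Vector_Spaces.linear s1 s2 (\<lambda>a. F a b)"
    and F2: "\<And>a. Vector_Spaces.linear s1 s2 (F a)"
  shows "(\<Sum>(a,b)\<leftarrow>xs. F a b) = (\<Sum>g\<in>C. F g (\<Sum>(a,b)\<leftarrow>xs. s1 (\<psi> g a) b))"
  using coords
proof (induction xs)
  case Nil
  then show ?case using linear_0[OF F2] by simp
next
  case (Cons p xs)
  obtain a b where p: "p = (a, b)" by fastforce
  have "a = (\<Sum>g\<in>C. s1 (\<psi> g a) g)"
    by (rule Cons.prems[of a b]) (simp add: p)
  then have "F a b = F (\<Sum>g\<in>C. s1 (\<psi> g a) g) b"
    by (rule arg_cong[where f="\<lambda>a. F a b"])
  also have "\<dots> = (\<Sum>g\<in>C. F g (s1 (\<psi> g a) b))"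
    by (simp add: linear_sum[OF F1] linear_scale[OF F2] linear_scale[OF F1])
  finally have "F a b = (\<Sum>g\<in>C. F g (s1 (\<psi> g a) b))" .
  moreover have "(\<Sum>(a,b)\<leftarrow>xs. F a b) = (\<Sum>g\<in>C. F g (\<Sum>(a,b)\<leftarrow>xs. s1 (\<psi> g a) b))"
    using Cons by auto
  ultimately show ?case
    by (simp add: p sum.distrib linear_add[OF F2])
qed

text \<open>Expanding the second legs in finitely many coordinates reduces an arbitrary bilinear map to
  products of functionals, which is all that tens_eq tests.\<close>

lemma tens_eq_bilinear_sums:
  assumes "tens_eq s1 xs ys"
    and F1: "\<And>b. Vector_Spaces.linear s1 s2 (\<lambda>a. F a b)"
    and F2: "\<And>a. Vector_Spaces.linear s1 s2 (F a)"
  shows "(\<Sum>(a,b)\<leftarrow>xs. F a b) = (\<Sum>(a,b)\<leftarrow>ys. F a b)"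
proof -
  interpret functionals: vector_space_pair s1 "(*)"
    by (rule vector_space_pair_scalars[OF vs1.vector_space_axioms])
  obtain C \<psi> where C: "finite C" "\<And>g. Vector_Spaces.linear s1 (*) (\<psi> g)"
    "\<And>x. x \<in> snd ` (set xs \<union> set ys) \<Longrightarrow> x = (\<Sum>g\<in>C. s1 (\<psi> g x) g)"
    using vs1.finite_set_coordinates[of "snd ` (set xs \<union> set ys)"] by blast
  have "(\<Sum>(a,b)\<leftarrow>xs. s1 (\<psi> g b) a) = (\<Sum>(a,b)\<leftarrow>ys. s1 (\<psi> g b) a)" for g
  proof (rule vs1.eq_if_functionals_agree)
    fix \<phi> assume \<phi>: "Vector_Spaces.linear s1 (*) \<phi>"
    have "(\<Sum>(a,b)\<leftarrow>xs. \<phi> a * \<psi> g b) = (\<Sum>(a,b)\<leftarrow>ys. \<phi> a * \<psi> g b)"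
      using assms(1) \<phi> C(2)[of g]
      unfolding tens_eq_def lin_fun_iff_linear[OF vs1.vector_space_axioms] by blast
    then show "\<phi> (\<Sum>(a,b)\<leftarrow>xs. s1 (\<psi> g b) a) = \<phi> (\<Sum>(a,b)\<leftarrow>ys. s1 (\<psi> g b) a)"
      by (simp add: functionals.linear_sum_list_pairs_scale[OF \<phi>] mult.commute)
  qed
  moreover have "(\<Sum>(a,b)\<leftarrow>zs. F a b) = (\<Sum>g\<in>C. F (\<Sum>(a,b)\<leftarrow>zs. s1 (\<psi> g b) a) g)"
    if "zs = xs \<or> zs = ys" for zs
    using C(1) _ F1 F2
    by (rule sum_list_pairs_expand_snd) (use that in \<open>auto intro!: C(3) rev_image_eqI\<close>)
  ultimately show ?thesis by simp
qed

lemma sum_list_triples_expand_trd: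
  assumes "finite C"
    and coords: "\<And>a b c. (a, b, c) \<in> set xs \<Longrightarrow> c = (\<Sum>g\<in>C. s1 (\<chi> g c) g)"
    and F1: "\<And>b c. Vector_Spaces.linear s1 s2 (\<lambda>a. F a b c)"
    and F3: "\<And>a b. Vector_Spaces.linear s1 s2 (F a b)"
  shows "(\<Sum>(a,b,c)\<leftarrow>xs. F a b c) = (\<Sum>g\<in>C. \<Sum>(a,b,c)\<leftarrow>xs. F (s1 (\<chi> g c) a) b g)"
  using coords
proof (induction xs)
  case (Cons p xs)
  obtain a b c where p: "p = (a, b, c)" by (cases p) auto
  have "c = (\<Sum>g\<in>C. s1 (\<chi> g c) g)"
    by (rule Cons.prems[of a b c]) (simp add: p)
  then have "F a b c = F a b (\<Sum>g\<in>C. s1 (\<chi> g c) g)"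
    by (rule arg_cong)
  also have "\<dots> = (\<Sum>g\<in>C. F (s1 (\<chi> g c) a) b g)"
    by (simp add: linear_sum[OF F3] linear_scale[OF F3] linear_scale[OF F1])
  finally have "F a b c = (\<Sum>g\<in>C. F (s1 (\<chi> g c) a) b g)" .
  moreover have "(\<Sum>(a,b,c)\<leftarrow>xs. F a b c) = (\<Sum>g\<in>C. \<Sum>(a,b,c)\<leftarrow>xs. F (s1 (\<chi> g c) a) b g)"
    using Cons by auto
  ultimately show ?case
    by (simp add: p sum.distrib)
qed simp

lemma tens3_eq_trilinear_sums:
  assumes "tens3_eq s1 xs ys"
    and F1: "\<And>b c. Vector_Spaces.linear s1 s2 (\<lambda>a. F a b c)"
    and F2: "\<And>a c. Vector_Spaces.linear s1 s2 (\<lambda>b. F a b c)"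
    and F3: "\<And>a b. Vector_Spaces.linear s1 s2 (F a b)"
  shows "(\<Sum>(a,b,c)\<leftarrow>xs. F a b c) = (\<Sum>(a,b,c)\<leftarrow>ys. F a b c)"
proof -
  interpret functionals: vector_space_pair s1 "(*)"
    by (rule vector_space_pair_scalars[OF vs1.vector_space_axioms])
  obtain C \<chi> where C: "finite C" "\<And>g. Vector_Spaces.linear s1 (*) (\<chi> g)"
    "\<And>x. x \<in> (snd \<circ> snd) ` (set xs \<union> set ys) \<Longrightarrow> x = (\<Sum>g\<in>C. s1 (\<chi> g x) g)"
    using vs1.finite_set_coordinates[of "(snd \<circ> snd) ` (set xs \<union> set ys)"] by blast
  define contract where "contract g zs = map (\<lambda>(a,b,c). (s1 (\<chi> g c) a, b)) zs"
    for g :: 'h and zs :: "('h \<times> 'h \<times> 'h) list"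
  have sums_contract: "(\<Sum>(a,b,c)\<leftarrow>zs. F (s1 (\<chi> g c) a) b g) = (\<Sum>(a,b)\<leftarrow>contract g zs. F a b g)"
    for g :: 'h and zs :: "('h \<times> 'h \<times> 'h) list"
    unfolding contract_def by (induction zs) auto
  have "tens_eq s1 (contract g xs) (contract g ys)" for g
    unfolding tens_eq_def
  proof (intro allI impI)
    fix \<phi> \<psi> assume "lin_fun s1 \<phi> \<and> lin_fun s1 \<psi>"
    then have \<phi>: "Vector_Spaces.linear s1 (*) \<phi>" and \<psi>: "Vector_Spaces.linear s1 (*) \<psi>"
      by (simp_all add: lin_fun_iff_linear[OF vs1.vector_space_axioms])
    have "(\<Sum>(a,b)\<leftarrow>contract g zs. \<phi> a * \<psi> b) = (\<Sum>(a,b,c)\<leftarrow>zs. \<phi> a * \<psi> b * \<chi> g c)" for zs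
      unfolding contract_def
      by (induction zs) (auto simp: functionals.linear_scale[OF \<phi>])
    moreover have "(\<Sum>(a,b,c)\<leftarrow>xs. \<phi> a * \<psi> b * \<chi> g c) = (\<Sum>(a,b,c)\<leftarrow>ys. \<phi> a * \<psi> b * \<chi> g c)"
      using assms(1) \<phi> \<psi> C(2)[of g]
      unfolding tens3_eq_def lin_fun_iff_linear[OF vs1.vector_space_axioms] by blast
    ultimately show "(\<Sum>(a,b)\<leftarrow>contract g xs. \<phi> a * \<psi> b) = (\<Sum>(a,b)\<leftarrow>contract g ys. \<phi> a * \<psi> b)"
      by simp
  qed
  then have "(\<Sum>(a,b,c)\<leftarrow>xs. F (s1 (\<chi> g c) a) b g) = (\<Sum>(a,b,c)\<leftarrow>ys. F (s1 (\<chi> g c) a) b g)" for g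
    unfolding sums_contract by (rule tens_eq_bilinear_sums) (auto intro: F1 F2)
  moreover have "(\<Sum>(a,b,c)\<leftarrow>zs. F a b c) = (\<Sum>g\<in>C. \<Sum>(a,b,c)\<leftarrow>zs. F (s1 (\<chi> g c) a) b g)"
    if "zs = xs \<or> zs = ys" for zs
    using C(1) _ F1 F3
    by (rule sum_list_triples_expand_trd) (use that in \<open>auto intro!: C(3) rev_image_eqI\<close>)
  ultimately show ?thesis by simp
qed

end

section \<open>Complete reducibility from retractions onto right ideals\<close>

definition minkowski_sum :: "'m::plus set \<Rightarrow> 'm set \<Rightarrow> 'm set" where
  "minkowski_sum A B = {x + y | x y. x \<in> A \<and> y \<in> B}"

definition ideal_retraction :: "'h::ring_1 set \<Rightarrow> 'h set \<Rightarrow> ('h \<Rightarrow> 'h) \<Rightarrow> bool" where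
  "ideal_retraction V J p \<longleftrightarrow> (\<forall>a\<in>V. p a \<in> J) \<and> (\<forall>j\<in>J. p j = j) \<and>
     (\<forall>a\<in>V. \<forall>c\<in>V. p (a * c) = p a * c) \<and> (\<forall>a\<in>V. \<forall>b\<in>V. p (a + b) = p a + p b)"

lemma submoduleD:
  assumes "submodule V M act N"
  shows "N \<subseteq> M" "0 \<in> N" "x \<in> N \<Longrightarrow> y \<in> N \<Longrightarrow> x + y \<in> N" "x \<in> N \<Longrightarrow> - x \<in> N"
    "x \<in> N \<Longrightarrow> a \<in> V \<Longrightarrow> act x a \<in> N"
  using assms by (auto simp: submodule_def)

lemma submodule_sum:
  assumes "submodule V M act N" "\<And>g. g \<in> C \<Longrightarrow> h g \<in> N"
  shows "sum h C \<in> N"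
  using assms(2)
  by (induction C rule: infinite_finite_induct) (use assms(1) in \<open>auto simp: submodule_def\<close>)

locale ring_right_module =
  fixes V :: "'h::ring_1 set" and e :: 'h and M :: "'m::ab_group_add set" and act :: "'m \<Rightarrow> 'h \<Rightarrow> 'm"
  assumes V_zero: "0 \<in> V" and V_add: "\<And>a b. a \<in> V \<Longrightarrow> b \<in> V \<Longrightarrow> a + b \<in> V"
    and V_mult: "\<And>a b. a \<in> V \<Longrightarrow> b \<in> V \<Longrightarrow> a * b \<in> V"
    and V_uminus: "\<And>a. a \<in> V \<Longrightarrow> - a \<in> V" and V_unit: "e \<in> V"
    and right_module: "right_module V e M act"
begin

lemma M_zero: "0 \<in> M"
  and M_add: "x \<in> M \<Longrightarrow> y \<in> M \<Longrightarrow> x + y \<in> M"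
  and act_closed: "x \<in> M \<Longrightarrow> a \<in> V \<Longrightarrow> act x a \<in> M"
  and act_add_left: "x \<in> M \<Longrightarrow> y \<in> M \<Longrightarrow> a \<in> V \<Longrightarrow> act (x + y) a = act x a + act y a"
  and act_add_right: "x \<in> M \<Longrightarrow> a \<in> V \<Longrightarrow> b \<in> V \<Longrightarrow> act x (a + b) = act x a + act x b"
  and act_mult: "x \<in> M \<Longrightarrow> a \<in> V \<Longrightarrow> b \<in> V \<Longrightarrow> act x (a * b) = act (act x a) b"
  and act_unit: "x \<in> M \<Longrightarrow> act x e = x"
  using right_module unfolding right_module_def by blast+

lemma V_diff: "a \<in> V \<Longrightarrow> b \<in> V \<Longrightarrow> a - b \<in> V"
  using V_add V_uminus by (metis diff_conv_add_uminus)

lemma act_zero_right: "x \<in> M \<Longrightarrow> act x 0 = 0"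
  using act_add_right[of x 0 0] V_zero by simp

lemma act_zero_left: "a \<in> V \<Longrightarrow> act 0 a = 0"
  using act_add_left[of 0 0 a] M_zero by simp

lemma act_diff_right: "x \<in> M \<Longrightarrow> a \<in> V \<Longrightarrow> b \<in> V \<Longrightarrow> act x (a - b) = act x a - act x b"
  using act_add_right[of x "a - b" b] V_diff by (simp add: eq_diff_eq)

lemma submodule_zero: "submodule V M act {0}"
  unfolding submodule_def using M_zero act_zero_left by auto

lemma submodule_minkowski_sum:
  assumes N: "submodule V M act N" and K: "submodule V M act K"
  shows "submodule V M act (minkowski_sum N K)"
  unfolding submodule_def
proof (intro conjI ballI)
  have "N \<subseteq> M" "K \<subseteq> M" "0 \<in> N" "0 \<in> K"
    using N K by (simp_all add: submodule_def)
  then show "minkowski_sum N K \<subseteq> M" "0 \<in> minkowski_sum N K"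
    unfolding minkowski_sum_def using M_add by (blast, force)
next
  fix u v assume "u \<in> minkowski_sum N K" "v \<in> minkowski_sum N K"
  then obtain x1 y1 x2 y2 where "u = x1 + y1" "v = x2 + y2" "x1 \<in> N" "y1 \<in> K" "x2 \<in> N" "y2 \<in> K"
    unfolding minkowski_sum_def by blast
  then show "u + v \<in> minkowski_sum N K"
    using N K unfolding submodule_def minkowski_sum_def
    by (intro CollectI exI[of _ "x1 + x2"] exI[of _ "y1 + y2"]) (simp add: ac_simps)
next
  fix u assume "u \<in> minkowski_sum N K"
  then obtain x y where "u = x + y" "x \<in> N" "y \<in> K"
    unfolding minkowski_sum_def by blast
  then show "- u \<in> minkowski_sum N K"
    using N K unfolding submodule_def minkowski_sum_def
    by (intro CollectI exI[of _ "- x"] exI[of _ "- y"]) (simp add: ac_simps)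
next
  fix u a assume "u \<in> minkowski_sum N K" "a \<in> V"
  then obtain x y where "u = x + y" "x \<in> N" "y \<in> K"
    unfolding minkowski_sum_def by blast
  then show "act u a \<in> minkowski_sum N K"
    using N K \<open>a \<in> V\<close> act_add_left[of x y a] unfolding submodule_def minkowski_sum_def by blast
qed

lemma submodule_Union_chain:
  assumes "C \<noteq> {}" and sub: "\<And>X. X \<in> C \<Longrightarrow> submodule V M act X"
    and chain: "\<And>X Y. X \<in> C \<Longrightarrow> Y \<in> C \<Longrightarrow> X \<subseteq> Y \<or> Y \<subseteq> X"
  shows "submodule V M act (\<Union>C)"
  unfolding submodule_def
proof (intro conjI ballI)
  show "\<Union>C \<subseteq> M"
    using submoduleD(1)[OF sub] by blast
  obtain X where "X \<in> C"
    using assms(1) by blast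
  then show "0 \<in> \<Union>C"
    using submoduleD(2)[OF sub] by blast
next
  fix x y assume "x \<in> \<Union>C" "y \<in> \<Union>C"
  then obtain X Y where XY: "X \<in> C" "Y \<in> C" "x \<in> X" "y \<in> Y" by blast
  then have "x \<in> X \<union> Y" "y \<in> X \<union> Y" "X \<union> Y \<in> C"
    using chain[OF XY(1,2)] by (auto simp: sup_absorb1 sup_absorb2)
  then show "x + y \<in> \<Union>C"
    using submoduleD(3)[OF sub] by blast
next
  fix x assume "x \<in> \<Union>C"
  then show "- x \<in> \<Union>C" using submoduleD(4)[OF sub] by blast
next
  fix x a assume "x \<in> \<Union>C" "a \<in> V"
  then show "act x a \<in> \<Union>C" using submoduleD(5)[OF sub] by blast
qed

lemma exists_maximal_disjoint_submodule:
  assumes N: "submodule V M act N"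
  obtains K where "submodule V M act K" "K \<inter> N = {0}"
    "\<And>K'. submodule V M act K' \<Longrightarrow> K' \<inter> N = {0} \<Longrightarrow> K \<subseteq> K' \<Longrightarrow> K' = K"
proof -
  define A where "A = {K. submodule V M act K \<and> K \<inter> N = {0}}"
  have "\<exists>K\<in>A. \<forall>X\<in>A. K \<subseteq> X \<longrightarrow> X = K"
  proof (rule Zorn_Lemma2, intro ballI)
    fix C assume C: "C \<in> chains A"
    have CA: "X \<in> A" if "X \<in> C" for X
      using chainsD2[OF C] that by blast
    show "\<exists>U\<in>A. \<forall>X\<in>C. X \<subseteq> U"
    proof (cases "C = {}")
      case True
      have "{0} \<in> A"
        using submodule_zero submoduleD(2)[OF N] by (simp add: A_def)
      then show ?thesis
        using True by blast
    next
      case False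
      have "submodule V M act (\<Union>C)"
      proof (rule submodule_Union_chain[OF False])
        show "submodule V M act X" if "X \<in> C" for X
          using CA[OF that] by (simp add: A_def)
        show "X \<subseteq> Y \<or> Y \<subseteq> X" if "X \<in> C" "Y \<in> C" for X Y
          using chainsD[OF C that] .
      qed
      moreover have "\<Union>C \<inter> N = {0}"
        using CA False unfolding A_def by blast
      ultimately show ?thesis
        unfolding A_def by blast
    qed
  qed
  then obtain K where "K \<in> A" "\<And>X. X \<in> A \<Longrightarrow> K \<subseteq> X \<Longrightarrow> X = K"
    by blast
  then show ?thesis
    using that[of K] by (simp add: A_def)
qed

lemma right_ideal_transporter:
  assumes m: "m \<in> M" and U: "submodule V M act U"
  shows "submodule V V (*) {a \<in> V. act m a \<in> U}"
  unfolding submodule_def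
proof (intro conjI ballI)
  show "{a \<in> V. act m a \<in> U} \<subseteq> V" "0 \<in> {a \<in> V. act m a \<in> U}"
    using U V_zero act_zero_right[OF m] by (auto simp: submodule_def)
next
  fix a b assume "a \<in> {a \<in> V. act m a \<in> U}" "b \<in> {a \<in> V. act m a \<in> U}"
  then show "a + b \<in> {a \<in> V. act m a \<in> U}"
    using U V_add act_add_right[OF m] by (auto simp: submodule_def)
next
  fix a assume "a \<in> {a \<in> V. act m a \<in> U}"
  then show "- a \<in> {a \<in> V. act m a \<in> U}"
    using U V_uminus act_diff_right[OF m V_zero, of a] act_zero_right[OF m] by (auto simp: submodule_def)
next
  fix a c assume "a \<in> {a \<in> V. act m a \<in> U}" "c \<in> V"
  then show "a * c \<in> {a \<in> V. act m a \<in> U}"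
    using U V_mult act_mult[OF m] by (auto simp: submodule_def)
qed

lemma submodule_act_image:
  assumes m: "m \<in> M" and q_VP: "\<And>a. a \<in> V \<Longrightarrow> q a \<in> V"
    and q_add: "\<And>a b. a \<in> V \<Longrightarrow> b \<in> V \<Longrightarrow> q (a + b) = q a + q b"
    and q_mult: "\<And>a c. a \<in> V \<Longrightarrow> c \<in> V \<Longrightarrow> q (a * c) = q a * c"
  shows "submodule V M act {act m (q a) | a. a \<in> V}"
  unfolding submodule_def
proof (intro conjI ballI)
  have q_zero: "q 0 = 0"
    using q_add[of 0 0] V_zero by simp
  show "{act m (q a) |a. a \<in> V} \<subseteq> M"
    using act_closed[OF m] q_VP by blast
  show "0 \<in> {act m (q a) |a. a \<in> V}"
    using V_zero q_zero act_zero_right[OF m] by (intro CollectI exI[of _ 0]) simp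
next
  fix u v assume "u \<in> {act m (q a) |a. a \<in> V}" "v \<in> {act m (q a) |a. a \<in> V}"
  then obtain a b where "a \<in> V" "b \<in> V" "u = act m (q a)" "v = act m (q b)" by blast
  then show "u + v \<in> {act m (q a) |a. a \<in> V}"
    using act_add_right[OF m q_VP q_VP] q_add V_add by (intro CollectI exI[of _ "a + b"]) simp
next
  fix u assume "u \<in> {act m (q a) |a. a \<in> V}"
  then obtain a where "a \<in> V" "u = act m (q a)" by blast
  moreover have "q (- a) = - q a"
    using q_add[of a "- a"] q_add[of 0 0] V_uminus V_zero \<open>a \<in> V\<close>
    by (simp add: eq_neg_iff_add_eq_0 add.commute)
  ultimately show "- u \<in> {act m (q a) |a. a \<in> V}"
    using act_diff_right[OF m V_zero q_VP] act_zero_right[OF m] V_uminus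
    by (intro CollectI exI[of _ "- a"]) simp
next
  fix u c assume "u \<in> {act m (q a) |a. a \<in> V}" "c \<in> V"
  then obtain a where "a \<in> V" "u = act m (q a)" by blast
  then show "act u c \<in> {act m (q a) |a. a \<in> V}"
    using act_mult[OF m q_VP \<open>c \<in> V\<close>] q_mult \<open>c \<in> V\<close> V_mult
    by (intro CollectI exI[of _ "a * c"]) simp
qed

lemma retraction_complement:
  assumes m: "m \<in> M" and U: "submodule V M act U"
    and p: "ideal_retraction V {a \<in> V. act m a \<in> U} p"
  defines "L \<equiv> {act m (a - p a) | a. a \<in> V}"
  shows "submodule V M act L" "L \<inter> U = {0}" "m \<in> minkowski_sum L U"
proof -
  have pJ: "a \<in> V \<Longrightarrow> p a \<in> V \<and> act m (p a) \<in> U"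
    and p_fix: "a \<in> V \<Longrightarrow> act m a \<in> U \<Longrightarrow> p a = a"
    and p_mult: "a \<in> V \<Longrightarrow> c \<in> V \<Longrightarrow> p (a * c) = p a * c"
    and p_add: "a \<in> V \<Longrightarrow> b \<in> V \<Longrightarrow> p (a + b) = p a + p b" for a b c
    using p unfolding ideal_retraction_def by auto
  have q_VP: "a \<in> V \<Longrightarrow> a - p a \<in> V" for a
    using V_diff pJ by blast
  show "submodule V M act L"
    unfolding L_def
    by (rule submodule_act_image[OF m q_VP]) (simp_all add: p_add p_mult left_diff_distrib)
  have "l = 0" if "l \<in> L" "l \<in> U" for l
  proof -
    obtain a where a: "a \<in> V" "l = act m (a - p a)"
      using \<open>l \<in> L\<close> unfolding L_def by blast
    then have "p (a - p a) = a - p a"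
      using p_fix q_VP \<open>l \<in> U\<close> by blast
    moreover have "p (a - p a) = 0"
      using p_add[of "a - p a" "p a"] pJ[OF a(1)] p_fix[of "p a"] q_VP[OF a(1)] by simp
    ultimately show "l = 0"
      using a act_zero_right[OF m] by simp
  qed
  then show "L \<inter> U = {0}"
    using \<open>submodule V M act L\<close> U submoduleD(2) by blast
  have "m = act m (e - p e) + act m (p e)"
    using act_unit[OF m] act_add_right[OF m q_VP[OF V_unit], of "p e"] pJ[OF V_unit] by simp
  then show "m \<in> minkowski_sum L U"
    unfolding minkowski_sum_def L_def using pJ[OF V_unit] V_unit by blast
qed

lemma minkowski_sum_disjoint:
  assumes N: "submodule V M act N" and K: "submodule V M act K" and L: "submodule V M act L"
    and "K \<inter> N = {0}" and "L \<inter> minkowski_sum N K = {0}"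
  shows "minkowski_sum K L \<inter> N = {0}"
proof -
  have "x = 0" if "k \<in> K" "l \<in> L" "x = k + l" "x \<in> N" for x k l
  proof -
    have "l \<in> minkowski_sum N K"
      unfolding minkowski_sum_def
      using that submoduleD(4)[OF K] by (intro CollectI exI[of _ x] exI[of _ "- k"]) simp
    then have "l = 0"
      using assms(5) that(2) by blast
    then show "x = 0"
      using assms(4) that by auto
  qed
  then show ?thesis
    using submoduleD(2)[OF K] submoduleD(2)[OF L] submoduleD(2)[OF N]
    unfolding minkowski_sum_def by force
qed

lemma completely_reducible_if_right_ideal_retractions:
  assumes retractions: "\<And>J. submodule V V (*) J \<Longrightarrow> \<exists>p. ideal_retraction V J p"
  shows "completely_reducible V M act"
  unfolding completely_reducible_def
proof (intro allI impI)
  fix N assume N: "submodule V M act N"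
  obtain K where K: "submodule V M act K" "K \<inter> N = {0}"
    and K_max: "\<And>K'. submodule V M act K' \<Longrightarrow> K' \<inter> N = {0} \<Longrightarrow> K \<subseteq> K' \<Longrightarrow> K' = K"
    using exists_maximal_disjoint_submodule[OF N] by blast
  define U where "U = minkowski_sum N K"
  have U: "submodule V M act U"
    unfolding U_def using submodule_minkowski_sum[OF N K(1)] .
  have "m \<in> U" if m: "m \<in> M" for m
  proof -
    obtain p where p: "ideal_retraction V {a \<in> V. act m a \<in> U} p"
      using retractions[OF right_ideal_transporter[OF m U]] by blast
    define L where "L = {act m (a - p a) | a. a \<in> V}"
    note L = retraction_complement[OF m U p, folded L_def]
    have "minkowski_sum K L \<inter> N = {0}"
      using minkowski_sum_disjoint[OF N K(1) L(1) K(2)] L(2) unfolding U_def .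
    moreover have "K \<subseteq> minkowski_sum K L"
      unfolding minkowski_sum_def using submoduleD(2)[OF L(1)] by force
    ultimately have "minkowski_sum K L = K"
      using K_max submodule_minkowski_sum[OF K(1) L(1)] by blast
    then have "L \<subseteq> U"
      unfolding U_def minkowski_sum_def using submoduleD(2)[OF K(1)] submoduleD(2)[OF N] by force
    then show "m \<in> U"
      using L(3) submoduleD(3)[OF U] unfolding minkowski_sum_def by blast
  qed
  then have "U = M"
    using submoduleD(1)[OF U] by blast
  then show "\<exists>N'. submodule V M act N' \<and> N \<inter> N' = {0} \<and> {x + y |x y. x \<in> N \<and> y \<in> N'} = M"
    using K unfolding U_def minkowski_sum_def by blast
qed

end

section \<open>Hopf algebras\<close>

locale hopf_alg =
  fixes sc :: "'k::field \<Rightarrow> 'h::ring_1 \<Rightarrow> 'h" and D :: "'h \<Rightarrow> ('h \<times> 'h) list"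
    and eps :: "'h \<Rightarrow> 'k" and S :: "'h \<Rightarrow> 'h"
  assumes hopf_algebra: "hopf_algebra sc D eps S"
begin

lemma vector_space: "vector_space sc"
  using hopf_algebra by (simp add: hopf_algebra_def)

lemma scale_mult_left: "sc c x * y = sc c (x * y)"
  using hopf_algebra by (simp add: hopf_algebra_def)

lemma scale_mult_right: "x * sc c y = sc c (x * y)"
  using hopf_algebra unfolding hopf_algebra_def by metis

lemma comult_affine: "tens_eq sc (D (sc c x + y)) (map (\<lambda>(a,b). (sc c a, b)) (D x) @ D y)"
  using hopf_algebra by (simp add: hopf_algebra_def)

lemma comult_mult:
  "tens_eq sc (D (x * y)) (concat (map (\<lambda>(a,b). map (\<lambda>(a',b'). (a * a', b * b')) (D y)) (D x)))"
  using hopf_algebra by (simp add: hopf_algebra_def)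

lemma comult_coassoc:
  "tens3_eq sc (concat (map (\<lambda>(a,b). map (\<lambda>(a',b'). (a', b', b)) (D a)) (D x)))
     (concat (map (\<lambda>(a,b). map (\<lambda>(b',b''). (a, b', b'')) (D b)) (D x)))"
  using hopf_algebra by (simp add: hopf_algebra_def)

lemma counit_mult: "eps (x * y) = eps x * eps y"
  using hopf_algebra by (simp add: hopf_algebra_def)

lemma counit_left: "(\<Sum>(a,b)\<leftarrow>D x. sc (eps a) b) = x"
  using hopf_algebra by (simp add: hopf_algebra_def)

lemma counit_right: "(\<Sum>(a,b)\<leftarrow>D x. sc (eps b) a) = x"
  using hopf_algebra by (simp add: hopf_algebra_def)

lemma antipode_linear: "Vector_Spaces.linear sc sc S"
  using hopf_algebra lin_map_iff_linear[OF vector_space] by (simp add: hopf_algebra_def)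

lemma antipode_left: "(\<Sum>(a,b)\<leftarrow>D x. S a * b) = sc (eps x) 1"
  using hopf_algebra by (simp add: hopf_algebra_def)

lemma antipode_right: "(\<Sum>(a,b)\<leftarrow>D x. a * S b) = sc (eps x) 1"
  using hopf_algebra by (simp add: hopf_algebra_def)

end

locale hopf_alg_module = hopf_alg sc D eps S + tensor_transfer sc s2
  for sc :: "'k::field \<Rightarrow> 'h::ring_1 \<Rightarrow> 'h" and D eps S and s2 :: "'k \<Rightarrow> 'b::ab_group_add \<Rightarrow> 'b"
begin

lemma sum_comult_affine:
  assumes F1: "\<And>b. Vector_Spaces.linear sc s2 (\<lambda>a. F a b)"
    and F2: "\<And>a. Vector_Spaces.linear sc s2 (F a)"
  shows "(\<Sum>(a,b)\<leftarrow>D (sc c x + y). F a b) = s2 c (\<Sum>(a,b)\<leftarrow>D x. F a b) + (\<Sum>(a,b)\<leftarrow>D y. F a b)"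
proof -
  have "(\<Sum>(a,b)\<leftarrow>D (sc c x + y). F a b) = (\<Sum>(a,b)\<leftarrow>map (\<lambda>(a,b). (sc c a, b)) (D x) @ D y. F a b)"
    by (rule tens_eq_bilinear_sums[OF comult_affine F1 F2])
  also have "\<dots> = (\<Sum>(a,b)\<leftarrow>D x. F (sc c a) b) + (\<Sum>(a,b)\<leftarrow>D y. F a b)"
    by (simp add: comp_def split_def)
  finally show ?thesis
    by (simp add: scale_sum_list_pairs linear_scale[OF F1])
qed

lemma linear_sum_comult:
  assumes "\<And>b. Vector_Spaces.linear sc s2 (\<lambda>a. F a b)" and "\<And>a. Vector_Spaces.linear sc s2 (F a)"
    and "Vector_Spaces.linear sc sc f"
  shows "Vector_Spaces.linear sc s2 (\<lambda>x. \<Sum>(a,b)\<leftarrow>D (f x). F a b)"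
proof -
  have "vector_space_pair sc sc"
    using vs1.vector_space_axioms by (simp add: vector_space_pair_def)
  then have "f (sc c x + y) = sc c (f x) + f y" for c x y
    using assms(3) linear_iff_preserves_affine_combination by blast
  then show ?thesis
    unfolding linear_iff_preserves_affine_combination[OF vector_space_pair_axioms]
    using sum_comult_affine[OF assms(1,2)] by simp
qed

lemma sum_comult_mult:
  assumes "\<And>b. Vector_Spaces.linear sc s2 (\<lambda>a. F a b)" and "\<And>a. Vector_Spaces.linear sc s2 (F a)"
  shows "(\<Sum>(a,b)\<leftarrow>D (x * y). F a b) = (\<Sum>(a,b)\<leftarrow>D x. \<Sum>(a',b')\<leftarrow>D y. F (a * a') (b * b'))"
proof -
  have concat: "(\<Sum>(a,b)\<leftarrow>concat (map (\<lambda>(a,b). map (\<lambda>(a',b'). (a * a', b * b')) (D y)) xs). F a b)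
      = (\<Sum>(a,b)\<leftarrow>xs. \<Sum>(a',b')\<leftarrow>D y. F (a * a') (b * b'))" for xs
    by (induction xs) (auto simp: comp_def split_def)
  show ?thesis
    using tens_eq_bilinear_sums[OF comult_mult[of x y] assms] unfolding concat .
qed

lemma sum_comult_coassoc:
  assumes "\<And>b c. Vector_Spaces.linear sc s2 (\<lambda>a. G a b c)"
    and "\<And>a c. Vector_Spaces.linear sc s2 (\<lambda>b. G a b c)"
    and "\<And>a b. Vector_Spaces.linear sc s2 (G a b)"
  shows "(\<Sum>(a,b)\<leftarrow>D x. \<Sum>(a',b')\<leftarrow>D a. G a' b' b) = (\<Sum>(a,b)\<leftarrow>D x. \<Sum>(b',b'')\<leftarrow>D b. G a b' b'')"
proof -
  have left: "(\<Sum>(a,b,c)\<leftarrow>concat (map (\<lambda>(a,b). map (\<lambda>(a',b'). (a', b', b)) (D a)) xs). G a b c)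
      = (\<Sum>(a,b)\<leftarrow>xs. \<Sum>(a',b')\<leftarrow>D a. G a' b' b)" for xs
    by (induction xs) (auto simp: comp_def split_def)
  have right: "(\<Sum>(a,b,c)\<leftarrow>concat (map (\<lambda>(a,b). map (\<lambda>(b',b''). (a, b', b'')) (D b)) xs). G a b c)
      = (\<Sum>(a,b)\<leftarrow>xs. \<Sum>(b',b'')\<leftarrow>D b. G a b' b'')" for xs
    by (induction xs) (auto simp: comp_def split_def)
  show ?thesis
    using tens3_eq_trilinear_sums[OF comult_coassoc[of x] assms] unfolding left right .
qed

end

sublocale hopf_alg \<subseteq> to_H: hopf_alg_module sc D eps S sc
  by (simp add: hopf_alg_module_def tensor_transfer_def vector_space_pair_def hopf_alg_axioms
      vector_space)

sublocale hopf_alg \<subseteq> to_k: hopf_alg_module sc D eps S "(*)"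
  by (simp add: hopf_alg_module_def tensor_transfer_def vector_space_pair_def hopf_alg_axioms
      vector_space vector_space_scalars)

context hopf_alg
begin

lemma linear_mult_right: "Vector_Spaces.linear sc sc f \<Longrightarrow> Vector_Spaces.linear sc sc (\<lambda>x. f x * k)"
  by (simp add: linear_iff_preserves_affine_combination to_H.vector_space_pair_axioms
      distrib_right scale_mult_left)

lemma linear_mult_left: "Vector_Spaces.linear sc sc f \<Longrightarrow> Vector_Spaces.linear sc sc (\<lambda>x. k * f x)"
  by (simp add: linear_iff_preserves_affine_combination to_H.vector_space_pair_axioms
      distrib_left scale_mult_right)

lemma linear_antipode_comp: "Vector_Spaces.linear sc sc f \<Longrightarrow> Vector_Spaces.linear sc sc (\<lambda>x. S (f x))"
  using Vector_Spaces.linear_compose[OF _ antipode_linear] by (simp add: comp_def)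

lemma linear_functional_comp:
  "Vector_Spaces.linear sc (*) \<phi> \<Longrightarrow> Vector_Spaces.linear sc sc f \<Longrightarrow> Vector_Spaces.linear sc (*) (\<lambda>x. \<phi> (f x))"
  using Vector_Spaces.linear_compose[of sc sc f "(*)" \<phi>] by (simp add: comp_def)

lemma linear_comp:
  "Vector_Spaces.linear sc sc g \<Longrightarrow> Vector_Spaces.linear sc sc f \<Longrightarrow> Vector_Spaces.linear sc sc (\<lambda>x. g (f x))"
  using Vector_Spaces.linear_compose[of sc sc f sc g] by (simp add: comp_def)

lemma linear_functional_mult_right:
  "Vector_Spaces.linear sc (*) g \<Longrightarrow> Vector_Spaces.linear sc (*) (\<lambda>x. g x * (k::'k))"
  using to_k.linear_compose_scale_right[of g k] by (simp add: mult.commute)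

lemma linear_functional_mult_left:
  "Vector_Spaces.linear sc (*) g \<Longrightarrow> Vector_Spaces.linear sc (*) (\<lambda>x. (k::'k) * g x)"
  by (rule to_k.linear_compose_scale_right)

lemmas linear_rules = to_H.vs1.linear_ident linear_mult_right linear_mult_left linear_antipode_comp
  to_H.linear_compose_scale_right linear_functional_mult_left linear_functional_mult_right
  to_H.linear_compose_sum_list_pairs to_k.linear_compose_sum_list_pairs
  to_H.linear_sum_comult to_k.linear_sum_comult

lemma antipode_scale: "S (sc c x) = sc c (S x)"
  by (rule to_H.linear_scale[OF antipode_linear])

lemma antipode_sum_list_pairs: "S (\<Sum>(a,b)\<leftarrow>xs. F a b) = (\<Sum>(a,b)\<leftarrow>xs. S (F a b))"
  by (rule to_H.linear_sum_list_pairs[OF antipode_linear])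

lemma antipode_sum_comult_mult:
  "(\<Sum>(a1,a2)\<leftarrow>D a. \<Sum>(c1,c2)\<leftarrow>D c. S (a1 * c1) * (a2 * c2)) = sc (eps a * eps c) 1"
proof -
  have "(\<Sum>(a1,a2)\<leftarrow>D a. \<Sum>(c1,c2)\<leftarrow>D c. S (a1 * c1) * (a2 * c2)) = (\<Sum>(e1,e2)\<leftarrow>D (a * c). S e1 * e2)"
    by (rule to_H.sum_comult_mult[symmetric]) (auto intro!: linear_rules)
  then show ?thesis
    by (simp add: antipode_left counit_mult)
qed

lemma sum_comult_sandwich_antipode:
  "(\<Sum>(d1,d2)\<leftarrow>D d. X * (b * d1) * (S d2 * Y)) = sc (eps d) (X * b * Y)"
proof -
  have "(\<Sum>(d1,d2)\<leftarrow>D d. X * (b * d1) * (S d2 * Y)) = X * b * (\<Sum>(d1,d2)\<leftarrow>D d. d1 * S d2) * Y"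
    by (simp add: sum_list_pairs_mult_right sum_list_pairs_mult_left mult.assoc)
  then show ?thesis
    by (simp add: antipode_right scale_mult_left scale_mult_right)
qed

text \<open>The two sides of antimultiplicativity arise from evaluating
  S(x1 y1) x2 y2 S(y3) S(x3) in two ways.\<close>

lemma antipode_mult_expansion_rev:
  "(\<Sum>(a,b)\<leftarrow>D x. \<Sum>(c,d)\<leftarrow>D y. \<Sum>(a1,a2)\<leftarrow>D a. \<Sum>(c1,c2)\<leftarrow>D c.
      S (a1 * c1) * (a2 * c2) * (S d * S b)) = S y * S x"
proof -
  have "(\<Sum>(a1,a2)\<leftarrow>D a. \<Sum>(c1,c2)\<leftarrow>D c. S (a1 * c1) * (a2 * c2) * K) = sc (eps a * eps c) K"
    for a c K
  proof -
    have "(\<Sum>(a1,a2)\<leftarrow>D a. \<Sum>(c1,c2)\<leftarrow>D c. S (a1 * c1) * (a2 * c2) * K)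
        = (\<Sum>(a1,a2)\<leftarrow>D a. \<Sum>(c1,c2)\<leftarrow>D c. S (a1 * c1) * (a2 * c2)) * K"
      by (simp add: sum_list_pairs_mult_right)
    then show ?thesis
      by (simp add: antipode_sum_comult_mult scale_mult_left)
  qed
  then have "(\<Sum>(a,b)\<leftarrow>D x. \<Sum>(c,d)\<leftarrow>D y. \<Sum>(a1,a2)\<leftarrow>D a. \<Sum>(c1,c2)\<leftarrow>D c.
      S (a1 * c1) * (a2 * c2) * (S d * S b))
      = (\<Sum>(a,b)\<leftarrow>D x. \<Sum>(c,d)\<leftarrow>D y. sc (eps c) (S d) * sc (eps a) (S b))"
    by (simp add: scale_mult_left scale_mult_right mult.commute)
  also have "\<dots> = (\<Sum>(c,d)\<leftarrow>D y. sc (eps c) (S d)) * (\<Sum>(a,b)\<leftarrow>D x. sc (eps a) (S b))"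
    by (simp only: sum_list_pairs_mult_right sum_list_pairs_mult_left)
  also have "\<dots> = S y * S x"
    by (simp add: to_H.linear_sum_list_pairs_scale[OF antipode_linear, symmetric] counit_left)
  finally show ?thesis .
qed

lemma antipode_mult_expansion:
  "(\<Sum>(a,b)\<leftarrow>D x. \<Sum>(c,d)\<leftarrow>D y. \<Sum>(a1,a2)\<leftarrow>D a. \<Sum>(c1,c2)\<leftarrow>D c.
      S (a1 * c1) * (a2 * c2) * (S d * S b)) = S (x * y)"
proof -
  have "(\<Sum>(a,b)\<leftarrow>D x. \<Sum>(c,d)\<leftarrow>D y. \<Sum>(a1,a2)\<leftarrow>D a. \<Sum>(c1,c2)\<leftarrow>D c.
      S (a1 * c1) * (a2 * c2) * (S d * S b))
    = (\<Sum>(a,b)\<leftarrow>D x. \<Sum>(a1,a2)\<leftarrow>D a. \<Sum>(c,d)\<leftarrow>D y. \<Sum>(c1,c2)\<leftarrow>D c.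
      S (a1 * c1) * (a2 * c2) * (S d * S b))"
    by (simp add: sum_list_pairs_swap[of _ "D y"])
  also have "\<dots> = (\<Sum>(a,b)\<leftarrow>D x. \<Sum>(b1,b2)\<leftarrow>D b. \<Sum>(c,d)\<leftarrow>D y. \<Sum>(c1,c2)\<leftarrow>D c.
      S (a * c1) * (b1 * c2) * (S d * S b2))"
    by (rule to_H.sum_comult_coassoc) (auto intro!: linear_rules)
  also have "\<dots> = (\<Sum>(a,b)\<leftarrow>D x. \<Sum>(b1,b2)\<leftarrow>D b. \<Sum>(c,d)\<leftarrow>D y. \<Sum>(d1,d2)\<leftarrow>D d.
      S (a * c) * (b1 * d1) * (S d2 * S b2))"
    by (rule sum_list_pairs_cong, rule sum_list_pairs_cong, rule to_H.sum_comult_coassoc;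
        auto intro!: linear_rules)
  also have "\<dots> = (\<Sum>(a,b)\<leftarrow>D x. \<Sum>(b1,b2)\<leftarrow>D b. \<Sum>(c,d)\<leftarrow>D y. sc (eps d) (S (a * c) * b1 * S b2))"
    by (simp only: sum_comult_sandwich_antipode)
  also have "\<dots> = (\<Sum>(a,b)\<leftarrow>D x. \<Sum>(c,d)\<leftarrow>D y. \<Sum>(b1,b2)\<leftarrow>D b. sc (eps d) (S (a * c) * b1 * S b2))"
    by (rule sum_list_pairs_cong, rule sum_list_pairs_swap)
  also have "\<dots> = (\<Sum>(a,b)\<leftarrow>D x. \<Sum>(c,d)\<leftarrow>D y. S (sc (eps b) a * sc (eps d) c))"
    by (simp add: to_H.scale_sum_list_pairs[symmetric] sum_list_pairs_mult_left[symmetric] mult.assoc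
        antipode_right scale_mult_left scale_mult_right antipode_scale mult.commute)
  also have "\<dots> = S ((\<Sum>(a,b)\<leftarrow>D x. sc (eps b) a) * (\<Sum>(c,d)\<leftarrow>D y. sc (eps d) c))"
    by (simp only: antipode_sum_list_pairs sum_list_pairs_mult_right sum_list_pairs_mult_left)
      (rule sum_list_pairs_swap)
  finally show ?thesis
    by (simp only: counit_right)
qed

lemma antipode_antimult: "S (x * y) = S y * S x"
  using antipode_mult_expansion antipode_mult_expansion_rev by simp

lemma antipode_left_mult: "(\<Sum>(a1,a2)\<leftarrow>D a. S a1 * (a2 * e)) = sc (eps a) e"
proof -
  have "(\<Sum>(a1,a2)\<leftarrow>D a. S a1 * (a2 * e)) = (\<Sum>(a1,a2)\<leftarrow>D a. S a1 * a2) * e"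
    by (simp add: sum_list_pairs_mult_right mult.assoc)
  then show ?thesis
    by (simp add: antipode_left scale_mult_left)
qed

lemma counit_left_mult: "(\<Sum>(a,b)\<leftarrow>D x. sc (eps a) (b * g)) = x * g"
proof -
  have "(\<Sum>(a,b)\<leftarrow>D x. sc (eps a) (b * g)) = (\<Sum>(a,b)\<leftarrow>D x. sc (eps a) b) * g"
    by (simp add: sum_list_pairs_mult_right scale_mult_left)
  then show ?thesis
    by (simp add: counit_left)
qed

lemma comult_second_leg_mult:
  assumes \<phi>: "Vector_Spaces.linear sc (*) \<phi>" and \<psi>: "Vector_Spaces.linear sc (*) \<psi>"
  shows "(\<Sum>(a,b)\<leftarrow>D w. \<phi> a * \<psi> (x * b))
    = (\<Sum>(x1,x2)\<leftarrow>D x. \<Sum>(e,g)\<leftarrow>D (x2 * w). \<phi> (S x1 * e) * \<psi> g)"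
proof -
  note linear_facts = linear_rules linear_functional_comp[OF \<phi>] linear_functional_comp[OF \<psi>]
  have "(\<Sum>(x1,x2)\<leftarrow>D x. \<Sum>(e,g)\<leftarrow>D (x2 * w). \<phi> (S x1 * e) * \<psi> g)
      = (\<Sum>(x1,x2)\<leftarrow>D x. \<Sum>(u,v)\<leftarrow>D x2. \<Sum>(e,g)\<leftarrow>D w. \<phi> (S x1 * (u * e)) * \<psi> (v * g))"
    by (rule sum_list_pairs_cong, rule to_k.sum_comult_mult) (auto intro!: linear_facts)
  also have "\<dots> = (\<Sum>(a,b)\<leftarrow>D x. \<Sum>(a1,a2)\<leftarrow>D a. \<Sum>(e,g)\<leftarrow>D w. \<phi> (S a1 * (a2 * e)) * \<psi> (b * g))"
    by (rule to_k.sum_comult_coassoc[symmetric]) (auto intro!: linear_facts)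
  also have "\<dots> = (\<Sum>(a,b)\<leftarrow>D x. \<Sum>(e,g)\<leftarrow>D w. \<Sum>(a1,a2)\<leftarrow>D a. \<phi> (S a1 * (a2 * e)) * \<psi> (b * g))"
    by (rule sum_list_pairs_cong, rule sum_list_pairs_swap)
  also have "\<dots> = (\<Sum>(a,b)\<leftarrow>D x. \<Sum>(e,g)\<leftarrow>D w. eps a * \<phi> e * \<psi> (b * g))"
  proof -
    have "(\<Sum>(a1,a2)\<leftarrow>D a. \<phi> (S a1 * (a2 * e)) * t) = \<phi> (\<Sum>(a1,a2)\<leftarrow>D a. S a1 * (a2 * e)) * t"
      for a e t
      by (simp add: sum_list_pairs_mult_right to_k.linear_sum_list_pairs[OF \<phi>])
    then show ?thesis
      by (simp add: antipode_left_mult to_k.linear_scale[OF \<phi>])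
  qed
  also have "\<dots> = (\<Sum>(e,g)\<leftarrow>D w. \<Sum>(a,b)\<leftarrow>D x. eps a * \<phi> e * \<psi> (b * g))"
    by (rule sum_list_pairs_swap)
  also have "\<dots> = (\<Sum>(e,g)\<leftarrow>D w. \<phi> e * \<psi> (x * g))"
  proof -
    have "\<psi> (x * g) = \<psi> (\<Sum>(a,b)\<leftarrow>D x. sc (eps a) (b * g))" for g
      by (simp only: counit_left_mult)
    then have "\<phi> e * \<psi> (x * g) = (\<Sum>(a,b)\<leftarrow>D x. eps a * \<phi> e * \<psi> (b * g))" for e g
      by (simp only: to_k.linear_sum_list_pairs_scale[OF \<psi>] sum_list_pairs_mult_left)
        (rule sum_list_pairs_cong, simp only: mult.assoc mult.left_commute)
    then show ?thesis
      by (simp only:)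
  qed
  finally show ?thesis ..
qed

lemma sum_comult_group_like:
  assumes "tens_eq sc (map (\<lambda>(a,b). (a, b * P)) (D P)) [(P, P)]"
    and "\<And>w. Vector_Spaces.linear sc (*) (\<lambda>p. K p w)" and "\<And>p. Vector_Spaces.linear sc (*) (K p)"
  shows "(\<Sum>(p,q)\<leftarrow>D P. K p (q * P)) = K P P"
  using to_k.tens_eq_bilinear_sums[OF assms] by (simp only: sum_list_pairs_map) simp

text \<open>The identity (1 \<otimes> a) \<Delta>(P) = (S(a) \<otimes> 1) \<Delta>(P) for a in V_P, tested against \<phi> \<otimes> \<psi>.\<close>

lemma comult_second_leg_mult_VP:
  assumes group_like: "tens_eq sc (map (\<lambda>(a,b). (a, b * P)) (D P)) [(P, P)]"
    and \<nu>: "Vector_Spaces.linear sc (*) \<nu>" and \<phi>: "Vector_Spaces.linear sc (*) \<phi>"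
    and \<psi>: "Vector_Spaces.linear sc (*) \<psi>"
  defines "a \<equiv> \<Sum>(p,q)\<leftarrow>D P. sc (\<nu> p) q"
  shows "(\<Sum>(x,b)\<leftarrow>D P. \<phi> x * \<psi> (a * b)) = (\<Sum>(x,b)\<leftarrow>D P. \<phi> (S a * x) * \<psi> b)"
proof -
  define K where "K p w = (\<Sum>(p1,p2)\<leftarrow>D p. \<nu> p1 * (\<Sum>(e,g)\<leftarrow>D w. \<phi> (S p2 * e) * \<psi> g))" for p w
  note linear_facts = linear_rules linear_functional_comp[OF \<phi>] linear_functional_comp[OF \<psi>]
    linear_functional_comp[OF \<nu>]
  have "\<psi> (a * b) = (\<Sum>(p,q)\<leftarrow>D P. \<nu> p * \<psi> (q * b))" for b
    unfolding a_def
    by (simp add: sum_list_pairs_mult_right scale_mult_left to_k.linear_sum_list_pairs_scale[OF \<psi>])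
  then have "(\<Sum>(x,b)\<leftarrow>D P. \<phi> x * \<psi> (a * b)) = (\<Sum>(x,b)\<leftarrow>D P. \<Sum>(p,q)\<leftarrow>D P. \<nu> p * (\<phi> x * \<psi> (q * b)))"
    by (simp only: sum_list_pairs_mult_left)
      (rule sum_list_pairs_cong, rule sum_list_pairs_cong, simp only: mult.left_commute)
  also have "\<dots> = (\<Sum>(p,q)\<leftarrow>D P. \<nu> p * (\<Sum>(x,b)\<leftarrow>D P. \<phi> x * \<psi> (q * b)))"
    by (subst sum_list_pairs_swap) (simp only: sum_list_pairs_mult_left)
  also have "\<dots> = (\<Sum>(p,q)\<leftarrow>D P. \<Sum>(q1,q2)\<leftarrow>D q. \<nu> p * (\<Sum>(e,g)\<leftarrow>D (q2 * P). \<phi> (S q1 * e) * \<psi> g))"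
    by (simp only: comult_second_leg_mult[OF \<phi> \<psi>] sum_list_pairs_mult_left)
  also have "\<dots> = (\<Sum>(p,q)\<leftarrow>D P. K p (q * P))"
    unfolding K_def
    by (rule to_k.sum_comult_coassoc[where G="\<lambda>a b c. \<nu> a * (\<Sum>(e,g)\<leftarrow>D (c * P). \<phi> (S b * e) * \<psi> g)",
          symmetric])
      (auto intro!: linear_facts)
  also have "\<dots> = K P P"
    by (rule sum_comult_group_like[OF group_like]) (auto simp only: K_def intro!: linear_facts)
  also have "\<dots> = (\<Sum>(p,q)\<leftarrow>D P. \<Sum>(x,b)\<leftarrow>D P. \<nu> p * (\<phi> (S q * x) * \<psi> b))"
    unfolding K_def by (simp only: sum_list_pairs_mult_left)
  also have "\<dots> = (\<Sum>(x,b)\<leftarrow>D P. \<Sum>(p,q)\<leftarrow>D P. \<nu> p * \<phi> (S q * x) * \<psi> b)"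
    by (subst sum_list_pairs_swap) (simp only: mult.assoc)
  also have "\<dots> = (\<Sum>(x,b)\<leftarrow>D P. \<phi> (S a * x) * \<psi> b)"
    unfolding a_def
    by (simp add: to_H.linear_sum_list_pairs_scale[OF antipode_linear] sum_list_pairs_mult_right
        scale_mult_left to_k.linear_sum_list_pairs_scale[OF \<phi>])
  finally show ?thesis .
qed

end

section \<open>The algebra V_P and the cyclic element\<close>

lemma alg_unit:
  assumes "\<exists>e\<in>V. \<forall>a\<in>V. e * a = a \<and> a * e = a"
  shows "alg_unit V \<in> V" "a \<in> V \<Longrightarrow> alg_unit V * a = a" "a \<in> V \<Longrightarrow> a * alg_unit V = a"
proof -
  obtain e where e: "e \<in> V" "\<forall>a\<in>V. e * a = a \<and> a * e = a"
    using assms by blast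
  have "alg_unit V = e"
    unfolding alg_unit_def
  proof (rule the_equality)
    show "e \<in> V \<and> (\<forall>a\<in>V. e * a = a \<and> a * e = a)"
      using e by blast
    show "e' = e" if "e' \<in> V \<and> (\<forall>a\<in>V. e' * a = a \<and> a * e' = a)" for e'
      using that e by metis
  qed
  then show "alg_unit V \<in> V" "a \<in> V \<Longrightarrow> alg_unit V * a = a" "a \<in> V \<Longrightarrow> a * alg_unit V = a"
    using e by auto
qed

locale group_like_cyclic = hopf_alg sc D eps S
  for sc :: "'k::field \<Rightarrow> 'h::ring_1 \<Rightarrow> 'h" and D eps S +
  fixes P y :: 'h
  assumes right_group_like: "right_group_like_proj sc D P"
    and frobenius: "frobenius sc (VP sc D P)"
    and cyclic: "cyclic_elem sc D S P y"
begin

abbreviation "V \<equiv> VP sc D P"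
abbreviation "W \<equiv> PV sc D P"
abbreviation "unit_VP \<equiv> alg_unit V"

lemma VP_zero: "0 \<in> V"
  using frobenius by (simp add: frobenius_def)

lemma VP_affine: "a \<in> V \<Longrightarrow> b \<in> V \<Longrightarrow> sc c a + b \<in> V"
  using frobenius by (simp add: frobenius_def)

lemma VP_mult: "a \<in> V \<Longrightarrow> b \<in> V \<Longrightarrow> a * b \<in> V"
  using frobenius by (simp add: frobenius_def)

lemma VP_add: "a \<in> V \<Longrightarrow> b \<in> V \<Longrightarrow> a + b \<in> V"
  using VP_affine[of a b 1] by simp

lemma VP_scale: "a \<in> V \<Longrightarrow> sc c a \<in> V"
  using VP_affine[of a 0 c] VP_zero by simp

lemma VP_uminus: "a \<in> V \<Longrightarrow> - a \<in> V"
  using VP_scale[of a "-1"] by (simp add: to_H.vs1.scale_minus_left)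

lemma VP_diff: "a \<in> V \<Longrightarrow> b \<in> V \<Longrightarrow> a - b \<in> V"
  using VP_add VP_uminus by (metis diff_conv_add_uminus)

lemma VP_finite_span: "\<exists>B. finite B \<and> B \<subseteq> V \<and> V = to_H.vs1.span B"
  using frobenius by (simp add: frobenius_def)

lemma VP_has_unit: "\<exists>e\<in>V. \<forall>a\<in>V. e * a = a \<and> a * e = a"
  using frobenius by (simp add: frobenius_def)

lemmas VP_unit = alg_unit[OF VP_has_unit]

lemma VP_iff: "a \<in> V \<longleftrightarrow> (\<exists>\<nu>. Vector_Spaces.linear sc (*) \<nu> \<and> a = (\<Sum>(p,q)\<leftarrow>D P. sc (\<nu> p) q))"
  unfolding VP_def lin_fun_iff_linear[OF vector_space] by blast

lemma PV_iff: "x \<in> W \<longleftrightarrow> (\<exists>\<nu>. Vector_Spaces.linear sc (*) \<nu> \<and> x = (\<Sum>(p,q)\<leftarrow>D P. sc (\<nu> q) p))"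
  unfolding PV_def lin_fun_iff_linear[OF vector_space] by blast

lemma group_like: "tens_eq sc (map (\<lambda>(a,b). (a, b * P)) (D P)) [(P, P)]"
  using right_group_like by (simp add: right_group_like_proj_def)

lemma linear_cyclic_map: "Vector_Spaces.linear sc sc (\<lambda>a. S a * y)"
  by (intro linear_rules)

lemma cyclic_map_image: "(\<lambda>a. S a * y) ` V = W"
  using cyclic by (simp add: cyclic_elem_def)

lemma PV_independent_of_VP_independent:
  assumes "finite B" "B \<subseteq> V" "to_H.vs1.independent B"
  obtains w where "inj_on w B" "w ` B \<subseteq> W" "to_H.vs1.independent (w ` B)"
proof -
  obtain \<psi> where \<psi>: "\<And>v. Vector_Spaces.linear sc (*) (\<psi> v)"
    and \<psi>_basis: "\<And>u v. u \<in> B \<Longrightarrow> \<psi> v u = (if v = u then 1 else 0)"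
    using to_H.vs1.exists_dual_functionals[OF assms(3)] by blast
  have "\<forall>v\<in>B. \<exists>\<nu>. Vector_Spaces.linear sc (*) \<nu> \<and> v = (\<Sum>(p,q)\<leftarrow>D P. sc (\<nu> p) q)"
    using assms(2) VP_iff by blast
  then obtain \<nu> where \<nu>: "\<And>v. v \<in> B \<Longrightarrow> Vector_Spaces.linear sc (*) (\<nu> v)"
    "\<And>v. v \<in> B \<Longrightarrow> v = (\<Sum>(p,q)\<leftarrow>D P. sc (\<nu> v p) q)"
    by metis
  define w where "w v = (\<Sum>(p,q)\<leftarrow>D P. sc (\<psi> v q) p)" for v
  have pairing: "\<nu> u (w v) = (if v = u then 1 else 0)" if "u \<in> B" for u v
  proof -
    have "\<nu> u (w v) = (\<Sum>(p,q)\<leftarrow>D P. \<nu> u p * \<psi> v q)"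
      unfolding w_def by (simp add: to_k.linear_sum_list_pairs_scale[OF \<nu>(1)[OF that]] mult.commute)
    also have "\<dots> = \<psi> v u"
      by (subst \<nu>(2)[OF that]) (simp add: to_k.linear_sum_list_pairs_scale[OF \<psi>])
    finally show ?thesis
      using \<psi>_basis[OF that] by simp
  qed
  have inj: "inj_on w B"
    by (rule inj_onI) (use pairing in \<open>metis one_neq_zero\<close>)
  moreover have "w ` B \<subseteq> W"
    unfolding w_def using \<psi> PV_iff by auto
  moreover have "to_H.vs1.independent (w ` B)"
  proof (rule to_H.vs1.independent_if_scalars_zero)
    show "finite (w ` B)"
      using assms(1) by simp
    fix f x assume sum0: "(\<Sum>x\<in>w ` B. sc (f x) x) = 0" and "x \<in> w ` B"
    then obtain u where u: "u \<in> B" "x = w u" by blast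
    have "\<nu> u (\<Sum>x\<in>w ` B. sc (f x) x) = (\<Sum>v\<in>B. f (w v) * \<nu> u (w v))"
      by (simp add: to_k.linear_sum[OF \<nu>(1)[OF u(1)]] to_k.linear_scale[OF \<nu>(1)[OF u(1)]]
          sum.reindex[OF inj])
    also have "\<dots> = (\<Sum>v\<in>B. if v = u then f (w v) else 0)"
      by (rule sum.cong) (simp_all add: pairing[OF u(1)])
    also have "\<dots> = f (w u)"
      using u(1) assms(1) by simp
    finally show "f x = 0"
      using sum0 u to_k.linear_0[OF \<nu>(1)[OF u(1)]] by simp
  qed
  ultimately show ?thesis by (rule that)
qed

lemma cyclic_map_inj_on: "inj_on (\<lambda>a. S a * y) V"
proof -
  have "a = 0" if a: "a \<in> V" "S a * y = 0" for a
  proof (rule ccontr)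
    assume "a \<noteq> 0"
    then have "to_H.vs1.independent {a}" by simp
    then obtain B where B: "{a} \<subseteq> B" "B \<subseteq> V" "to_H.vs1.independent B" "V \<subseteq> to_H.vs1.span B"
      using to_H.vs1.maximal_independent_subset_extend[of "{a}" V] a by auto
    obtain B0 where B0: "finite B0" "V = to_H.vs1.span B0"
      using VP_finite_span by blast
    have "finite B"
      using to_H.vs1.independent_span_bound[OF B0(1) B(3)] B(2) B0(2) by auto
    obtain w where w: "inj_on w B" "w ` B \<subseteq> W" "to_H.vs1.independent (w ` B)"
      using PV_independent_of_VP_independent[OF \<open>finite B\<close> B(2,3)] .
    have "W \<subseteq> to_H.vs1.span ((\<lambda>a. S a * y) ` B)"
      using to_H.linear_spans_image[OF linear_cyclic_map B(4)] cyclic_map_image by simp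
    also have "(\<lambda>a. S a * y) ` B = insert 0 ((\<lambda>a. S a * y) ` (B - {a}))"
      using a B(1) by auto
    finally have "w ` B \<subseteq> to_H.vs1.span ((\<lambda>a. S a * y) ` (B - {a}))"
      using w(2) by simp
    then have "card (w ` B) \<le> card ((\<lambda>a. S a * y) ` (B - {a}))"
      using to_H.vs1.independent_span_bound[OF _ w(3)] \<open>finite B\<close> by auto
    also have "\<dots> \<le> card (B - {a})"
      using \<open>finite B\<close> by (simp add: card_image_le)
    also have "\<dots> < card B"
      using card_Diff1_less[OF \<open>finite B\<close>, of a] B(1) by simp
    finally show False
      using card_image[OF w(1)] by simp
  qed
  then show ?thesis
    by (intro inj_onI) (metis to_H.linear_diff[OF linear_cyclic_map] VP_diff right_minus_eq)
qed

abbreviation "\<iota> \<equiv> iota sc D S P y"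

lemma iota_cyclic_map: "a \<in> V \<Longrightarrow> \<iota> (S a * y) = a"
  unfolding iota_def by (rule inv_into_f_f[OF cyclic_map_inj_on])

lemma iota_in_VP: "x \<in> W \<Longrightarrow> \<iota> x \<in> V"
proof -
  assume "x \<in> W"
  then have "x \<in> (\<lambda>a. S a * y) ` V" using cyclic_map_image by simp
  then show ?thesis unfolding iota_def by (rule inv_into_into)
qed

lemma cyclic_map_iota: "x \<in> W \<Longrightarrow> S (\<iota> x) * y = x"
proof -
  assume "x \<in> W"
  then have "x \<in> (\<lambda>a. S a * y) ` V" using cyclic_map_image by simp
  then show ?thesis unfolding iota_def by (rule f_inv_into_f)
qed

lemma VP_subspace: "to_H.vs1.subspace V"
  unfolding to_H.vs1.subspace_def using VP_zero VP_add VP_scale by blast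

lemma exists_linear_extension_iota: "\<exists>f. lin_map sc f \<and> (\<forall>x\<in>W. f x = \<iota> x)"
proof -
  obtain g where g: "Vector_Spaces.linear sc sc g" "\<forall>a\<in>V. g (S a * y) = a"
    using to_H.linear_exists_left_inverse_on[OF linear_cyclic_map VP_subspace cyclic_map_inj_on]
    by blast
  have "g x = \<iota> x" if "x \<in> W" for x
    using g(2)[rule_format, OF iota_in_VP[OF that]] cyclic_map_iota[OF that] by simp
  then show ?thesis
    using g(1) lin_map_iff_linear[OF vector_space] by blast
qed

text \<open>zy evaluates some linear extension of \<iota> to all of H; iota_ext names that choice.\<close>

definition iota_ext :: "'h \<Rightarrow> 'h" where
  "iota_ext = (SOME f. lin_map sc f \<and> (\<forall>x\<in>W. f x = \<iota> x))"

lemma linear_iota_ext: "Vector_Spaces.linear sc sc iota_ext"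
  and iota_ext_PV: "x \<in> W \<Longrightarrow> iota_ext x = \<iota> x"
  using someI_ex[OF exists_linear_extension_iota] lin_map_iff_linear[OF vector_space]
  unfolding iota_ext_def by auto

lemma zy_eq: "zy sc D S P y = (\<Sum>(a,b)\<leftarrow>D P. b * iota_ext a)"
  unfolding zy_def iota_ext_def Let_def ..

lemma iota_ext_antipode_mult:
  assumes "x \<in> W" "c \<in> V"
  shows "S c * x \<in> W" "iota_ext (S c * x) = iota_ext x * c"
proof -
  have "\<iota> x * c \<in> V"
    using VP_mult iota_in_VP assms by blast
  moreover have Sc: "S c * x = S (\<iota> x * c) * y"
    using cyclic_map_iota[OF assms(1)] by (simp add: antipode_antimult mult.assoc)
  ultimately show W: "S c * x \<in> W"
    using cyclic_map_image by blast
  have "iota_ext (S c * x) = \<iota> (S (\<iota> x * c) * y)"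
    using iota_ext_PV[OF W] Sc by simp
  also have "\<dots> = iota_ext x * c"
    using iota_cyclic_map[OF \<open>\<iota> x * c \<in> V\<close>] iota_ext_PV[OF assms(1)] by simp
  finally show "iota_ext (S c * x) = iota_ext x * c" .
qed

lemma iota_ext_first_leg_mult:
  assumes c: "c \<in> V" and \<phi>: "Vector_Spaces.linear sc (*) \<phi>" and \<psi>: "Vector_Spaces.linear sc (*) \<psi>"
  shows "(\<Sum>(a,b)\<leftarrow>D P. \<phi> (iota_ext a * c) * \<psi> b) = (\<Sum>(a,b)\<leftarrow>D P. \<phi> (iota_ext a) * \<psi> (c * b))"
proof -
  obtain \<nu> where \<nu>: "Vector_Spaces.linear sc (*) \<nu>" "c = (\<Sum>(p,q)\<leftarrow>D P. sc (\<nu> p) q)"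
    using c unfolding VP_iff by blast
  have \<phi>_iota: "Vector_Spaces.linear sc (*) (\<lambda>x. \<phi> (iota_ext x))"
    by (rule linear_functional_comp[OF \<phi> linear_iota_ext])
  define X where "X = (\<Sum>(a,b)\<leftarrow>D P. sc (\<psi> b) a)"
  have X: "X \<in> W"
    unfolding X_def using \<psi> PV_iff by auto
  have "(\<Sum>(a,b)\<leftarrow>D P. \<phi> (iota_ext a) * \<psi> (c * b)) = (\<Sum>(a,b)\<leftarrow>D P. \<phi> (iota_ext (S c * a)) * \<psi> b)"
    using comult_second_leg_mult_VP[OF group_like \<nu>(1) \<phi>_iota \<psi>] \<nu>(2) by simp
  also have "\<dots> = (\<Sum>(a,b)\<leftarrow>D P. \<psi> b * \<phi> (iota_ext (S c * a)))"
    by (simp add: mult.commute)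
  also have "\<dots> = \<phi> (iota_ext (S c * X))"
    unfolding X_def
    by (rule to_k.linear_sum_list_pairs_scale[symmetric])
      (intro linear_functional_comp[OF \<phi>] linear_comp[OF linear_iota_ext] linear_rules)
  also have "\<dots> = \<phi> (iota_ext X * c)"
    using iota_ext_antipode_mult[OF X c] by simp
  also have "\<dots> = (\<Sum>(a,b)\<leftarrow>D P. \<psi> b * \<phi> (iota_ext a * c))"
    unfolding X_def
    by (rule to_k.linear_sum_list_pairs_scale)
      (intro linear_functional_comp[OF \<phi>] linear_mult_right linear_iota_ext)
  also have "\<dots> = (\<Sum>(a,b)\<leftarrow>D P. \<phi> (iota_ext a * c) * \<psi> b)"
    by (simp add: mult.commute)
  finally show ?thesis ..
qed

lemma tens_eq_iota_ext_first_leg_mult: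
  "c \<in> V \<Longrightarrow> tens_eq sc (map (\<lambda>(a,b). (iota_ext a * c, b)) (D P)) (map (\<lambda>(a,b). (iota_ext a, c * b)) (D P))"
  unfolding tens_eq_def lin_fun_iff_linear[OF vector_space] sum_list_pairs_map
  using iota_ext_first_leg_mult by blast

lemma zy_commute: "c \<in> V \<Longrightarrow> zy sc D S P y * c = c * zy sc D S P y"
proof -
  assume c: "c \<in> V"
  have "(\<Sum>(u,v)\<leftarrow>map (\<lambda>(a,b). (iota_ext a * c, b)) (D P). v * u)
      = (\<Sum>(u,v)\<leftarrow>map (\<lambda>(a,b). (iota_ext a, c * b)) (D P). v * u)"
    by (rule to_H.tens_eq_bilinear_sums[OF tens_eq_iota_ext_first_leg_mult[OF c]]) (auto intro: linear_rules)
  then show ?thesis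
    unfolding zy_eq sum_list_pairs_map sum_list_pairs_mult_left sum_list_pairs_mult_right
    by (simp add: mult.assoc)
qed

lemma right_ideal_subspace:
  assumes J: "submodule V V (*) J"
  shows "to_H.vs1.subspace J"
proof -
  have "sc c j \<in> J" if "j \<in> J" for c j
  proof -
    have "j \<in> V" using J that by (auto simp: submodule_def)
    then have "sc c j = j * sc c unit_VP"
      by (simp add: scale_mult_right VP_unit(3))
    then show ?thesis
      using J that VP_scale[OF VP_unit(1)] by (simp add: submodule_def)
  qed
  then show ?thesis
    using J by (simp add: to_H.vs1.subspace_def submodule_def)
qed

definition averaged :: "('h \<Rightarrow> 'h) \<Rightarrow> 'h \<Rightarrow> 'h" where
  "averaged E a = (\<Sum>(x,b)\<leftarrow>D P. E (a * b) * iota_ext x)"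

lemma averaged_in_right_ideal:
  assumes J: "submodule V V (*) J" and E: "Vector_Spaces.linear sc sc E" "\<And>x. E x \<in> J"
  shows "averaged E a \<in> J"
proof -
  obtain C \<psi> where C: "finite C" "\<And>g. Vector_Spaces.linear sc (*) (\<psi> g)"
    "\<And>x. x \<in> snd ` set (D P) \<Longrightarrow> x = (\<Sum>g\<in>C. sc (\<psi> g x) g)"
    using to_H.vs1.finite_set_coordinates[of "snd ` set (D P)"] by blast
  have "averaged E a = (\<Sum>g\<in>C. E (a * g) * iota_ext (\<Sum>(x,b)\<leftarrow>D P. sc (\<psi> g b) x))"
    unfolding averaged_def
    by (rule to_H.sum_list_pairs_expand_snd[OF C(1), where F="\<lambda>x b. E (a * b) * iota_ext x"])
      (auto intro!: C(3) rev_image_eqI linear_rules linear_comp[OF E(1)] linear_iota_ext)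
  also have "\<dots> \<in> J"
  proof (rule submodule_sum[OF J])
    fix g
    have "(\<Sum>(x,b)\<leftarrow>D P. sc (\<psi> g b) x) \<in> W"
      using C(2) PV_iff by auto
    then have "iota_ext (\<Sum>(x,b)\<leftarrow>D P. sc (\<psi> g b) x) \<in> V"
      using iota_ext_PV iota_in_VP by simp
    then show "E (a * g) * iota_ext (\<Sum>(x,b)\<leftarrow>D P. sc (\<psi> g b) x) \<in> J"
      using J E(2) by (simp add: submodule_def)
  qed
  finally show ?thesis .
qed

lemma averaged_right_ideal_element:
  assumes J: "submodule V V (*) J" and j: "j \<in> J"
    and E: "Vector_Spaces.linear sc sc E" "\<And>j. j \<in> J \<Longrightarrow> E j = j"
  shows "averaged E j = j * zy sc D S P y"
proof -
  obtain C \<phi> where C: "finite C" "\<And>g. Vector_Spaces.linear sc (*) (\<phi> g)"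
    "\<And>x. x \<in> fst ` set (D P) \<Longrightarrow> x = (\<Sum>g\<in>C. sc (\<phi> g x) g)"
    using to_H.vs1.finite_set_coordinates[of "fst ` set (D P)"] by blast
  have "(\<Sum>(x,b)\<leftarrow>D P. (E (j * b) - j * b) * iota_ext x)
      = (\<Sum>g\<in>C. (E (j * (\<Sum>(x,b)\<leftarrow>D P. sc (\<phi> g x) b)) - j * (\<Sum>(x,b)\<leftarrow>D P. sc (\<phi> g x) b))
          * iota_ext g)"
    by (rule to_H.sum_list_pairs_expand_fst[OF C(1), where F="\<lambda>x b. (E (j * b) - j * b) * iota_ext x"])
      (auto intro!: C(3) rev_image_eqI linear_rules linear_comp[OF E(1)] linear_iota_ext
        to_H.linear_compose_sub)
  also have "\<dots> = 0"
  proof (rule sum.neutral, intro ballI)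
    fix g
    have "(\<Sum>(x,b)\<leftarrow>D P. sc (\<phi> g x) b) \<in> V"
      using C(2) VP_iff by auto
    then have "j * (\<Sum>(x,b)\<leftarrow>D P. sc (\<phi> g x) b) \<in> J"
      using J j by (simp add: submodule_def)
    then show "(E (j * (\<Sum>(x,b)\<leftarrow>D P. sc (\<phi> g x) b)) - j * (\<Sum>(x,b)\<leftarrow>D P. sc (\<phi> g x) b))
        * iota_ext g = 0"
      using E(2) by simp
  qed
  finally have "averaged E j = (\<Sum>(x,b)\<leftarrow>D P. j * b * iota_ext x)"
    unfolding averaged_def by (simp add: left_diff_distrib sum_list_pairs_diff)
  then show ?thesis
    by (simp add: zy_eq sum_list_pairs_mult_left mult.assoc)
qed

lemma averaged_mult_VP:
  assumes E: "Vector_Spaces.linear sc sc E" and c: "c \<in> V"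
  shows "averaged E (a * c) = averaged E a * c"
proof -
  have "(\<Sum>(u,v)\<leftarrow>map (\<lambda>(x,b). (iota_ext x * c, b)) (D P). E (a * v) * u)
      = (\<Sum>(u,v)\<leftarrow>map (\<lambda>(x,b). (iota_ext x, c * b)) (D P). E (a * v) * u)"
    by (rule to_H.tens_eq_bilinear_sums[OF tens_eq_iota_ext_first_leg_mult[OF c]])
      (auto intro!: linear_rules linear_comp[OF E])
  then show ?thesis
    unfolding averaged_def sum_list_pairs_map
    by (simp add: sum_list_pairs_mult_right mult.assoc)
qed

lemma right_ideal_retraction_exists:
  assumes z: "invertible_in V (zy sc D S P y)" and J: "submodule V V (*) J"
  shows "\<exists>p. ideal_retraction V J p"
proof -
  obtain w where w: "w \<in> V" "zy sc D S P y * w = unit_VP" "w * zy sc D S P y = unit_VP"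
    using z unfolding invertible_in_def by blast
  have w_commute: "w * c = c * w" if "c \<in> V" for c
  proof -
    have "w * c = w * (c * zy sc D S P y) * w"
      using w(2) VP_unit(3)[OF that] by (simp add: mult.assoc)
    also have "\<dots> = (w * zy sc D S P y) * c * w"
      using zy_commute[OF that] by (simp add: mult.assoc)
    also have "\<dots> = c * w"
      using w(3) VP_unit(2)[OF that] by simp
    finally show ?thesis .
  qed
  have "to_H.vs1.subspace J"
    by (rule right_ideal_subspace[OF J])
  then obtain E where E: "Vector_Spaces.linear sc sc E" "\<And>x. E x \<in> J" "\<And>j. j \<in> J \<Longrightarrow> E j = j"
    using to_H.vs1.exists_linear_projection by blast
  define p where "p a = averaged E a * w" for a
  have "p a \<in> J" for a
    using averaged_in_right_ideal[OF J E(1,2)] J w(1) by (simp add: p_def submodule_def)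
  moreover have "p j = j" if "j \<in> J" for j
    using averaged_right_ideal_element[OF J that E(1,3)] w(2) VP_unit(3) J that
    by (auto simp: p_def submodule_def mult.assoc)
  moreover have "p (a * c) = p a * c" if "c \<in> V" for a c
    using averaged_mult_VP[OF E(1) that] w_commute[OF that] by (simp add: p_def mult.assoc)
  moreover have "p (a + b) = p a + p b" for a b
    unfolding p_def averaged_def
    by (simp add: to_H.linear_add[OF E(1)] distrib_left distrib_right sum_list_pairs_add)
  ultimately show ?thesis
    unfolding ideal_retraction_def by blast
qed

end

theorem mainTheorem20:
  fixes sc :: "'k::field \<Rightarrow> 'h::ring_1 \<Rightarrow> 'h"
    and D :: "'h \<Rightarrow> ('h \<times> 'h) list" and eps :: "'h \<Rightarrow> 'k" and S :: "'h \<Rightarrow> 'h"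
    and P y :: 'h
  assumes "hopf_algebra sc D eps S"
    and "right_group_like_proj sc D P"
    and "frobenius sc (VP sc D P)"
    and "cyclic_elem sc D S P y"
    and "invertible_in (VP sc D P) (zy sc D S P y)"
  shows "(\<forall>(M :: 'm::ab_group_add set) act.
            right_module (VP sc D P) (alg_unit (VP sc D P)) M act \<longrightarrow>
            completely_reducible (VP sc D P) M act)
         \<and> semisimple_alg (VP sc D P)"
proof -
  interpret group_like_cyclic sc D eps S P y
    using assms(1-4) by (simp add: group_like_cyclic_def group_like_cyclic_axioms_def hopf_alg_def)
  have reducible: "completely_reducible V M act" if "right_module V unit_VP M act"
    for M :: "'n::ab_group_add set" and act
  proof -
    interpret ring_right_module V unit_VP M act
      using VP_zero VP_add VP_mult VP_uminus VP_unit(1) that by unfold_locales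
    show ?thesis
      using completely_reducible_if_right_ideal_retractions right_ideal_retraction_exists[OF assms(5)]
      by blast
  qed
  have regular: "right_module V unit_VP V (*)"
    using VP_zero VP_add VP_mult VP_uminus VP_unit(3)
    by (auto simp: right_module_def distrib_left distrib_right mult.assoc)
  show ?thesis
    using reducible reducible[OF regular] unfolding semisimple_alg_def by blast
qed

end
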